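(* Let $(X,\mathcal R)$ and $(Y,\mathcal S)$ be exactly triply regular symmetric $d$-class association schemes having the same Delta–Wye parameters with respect to orderings $A_0,\dots,A_d$, $A'_0,\dots,A'_d$ of their adjacency matrices and $E_0,\dots,E_d$, $E'_0,\dots,E'_d$ of their primitive idempotents. Then, under these orderings, the two schemes have the same intersection numbers $p_{ij}^k$, the same eigenvalues $P_{ji}$, the same dual eigenvalues $Q_{ji}$ and the same Krein parameters $q_{ij}^k$. Moreover the linear map $\kappa:\mathbb A\to\mathbb A'$ defined by $\kappa(A_i)=A'_i$ ($0\le i\le d$) satisfies $\kappa(MN)=\kappa(M)\kappa(N)$ and $\kappa(M\circ N)=\kappa(M)\circ\kappa(N)$ for all $M,N\in\mathbb A$, and $\kappa(E_j)=E'_j$ for all $j$.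
   Context: A symmetric $d$-class association scheme $(X,\mathcal R)$ consists of a finite nonempty set $X$ and a partition $\mathcal R=\{R_0,\dots,R_d\}$ of $X\times X$ into nonempty symmetric relations, with $R_0=\{(x,x):x\in X\}$, such that for all $i,j,k$ the number $p_{ij}^k=|\{z\in X:(x,z)\in R_i,(z,y)\in R_j\}|$ (the intersection numbers) does not depend on the choice of $(x,y)\in R_k$. The adjacency matrix $A_i\in\mathrm{Mat}_X(\mathbb C)$ is the $0/1$ matrix of $R_i$. The Bose–Mesner algebra $\mathbb A=\mathrm{span}\{A_0,\dots,A_d\}$ is commutative and closed under ordinary matrix product and under the entrywise (Schur) product $\circ$; it has a second basis of primitive idempotents $E_0,\dots,E_d$ (symmetric, $E_iE_j=\delta_{ij}E_i$, $\sum_j E_j=I$). Eigenvalues $P_{ji}$ and dual eigenvalues $Q_{ji}$ are defined by $A_i=\sum_j P_{ji}E_j$ and $E_i=|X|^{-1}\sum_j Q_{ji}A_j$, and Krein parameters $q_{ij}^k$ by $E_i\circ E_j=|X|^{-1}\sum_k q_{ij}^kE_k$. $\mathbb A'$ denotes the Bose–Mesner algebra of $(Y,\mathcal S)$. For $L,M,N\in\mathrm{Mat}_X(\mathbb C)$ define tensors in $(\mathbb C^X)^{\otimes 3}$: $\Delta(L,M,N)=\sum_{x,y,z\in X}L_{xz}M_{xy}N_{yz}\,\hat x\otimes\hat y\otimes\hat z$ and $\Upsilon(L,M,N)=\sum_{x,y,z,u\in X}L_{xu}M_{yu}N_{zu}\,\hat x\otimes\hat y\otimes\hat z$. Let $\Delta(\mathbb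 A)$ and $\Upsilon(\mathbb A)$ be the spans of all $\Delta(L,M,N)$, resp. $\Upsilon(L,M,N)$, with $L,M,N\in\mathbb A$. The scheme is triply regular if $\Upsilon(\mathbb A)\subseteq\Delta(\mathbb A)$, dually triply regular if $\Delta(\mathbb A)\subseteq\Upsilon(\mathbb A)$, and exactly triply regular if both hold. It is known that the tensors $\Upsilon(E_r,E_s,E_t)$ with $q_{rs}^t>0$ form a basis of $\Upsilon(\mathbb A)$. Delta–Wye parameters: if the scheme is exactly triply regular, then for each $i,j,k\in\{0,\dots,d\}$ there are unique scalars $\sigma^{i,j,k}_{r,s,t}$ ($r,s,t$ with $q_{rs}^t>0$; set $\sigma^{i,j,k}_{r,s,t}=0$ when $q_{rs}^t=0$) such that $\Delta(A_i,A_j,A_k)=\sum_{q_{rs}^t>0}\sigma^{i,j,k}_{r,s,t}\,\Upsilon(E_r,E_s,E_t)$. Two exactly triply regular $d$-class schemes $(X,\mathcal R)$, $(Y,\mathcal S)$ have the same Delta–Wye parameters if there are orderings $A_0,\dots,A_d$ and $A'_0,\dots,A'_d$ of their adjacency matrices and $E_0,\dots,E_d$ and $E'_0,\dots,E'_d$ of their primitive idempotents such that $\sigma^{i,j,k}_{r,s,t}$ computed in $(X,\mathcal R)$ equals the corresponding $\sigma^{i,j,k}_{r,s,t}$ computed in $(Y,\mathcal S)$ for all $i,j,k,r,s,t\in\{0,\dots,d\}$. *)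

theory Defs
  imports Complex_Main "HOL-Library.Function_Algebras"
begin

type_synonym 'x mat = "'x \<Rightarrow> 'x \<Rightarrow> complex"
type_synonym 'x tensor = "'x \<Rightarrow> 'x \<Rightarrow> 'x \<Rightarrow> complex"

definition adj :: "('x \<times> 'x) set \<Rightarrow> 'x mat" where
  "adj Rel = (\<lambda>x y. if (x, y) \<in> Rel then 1 else 0)"

definition idm :: "'x mat" where
  "idm = (\<lambda>x y. if x = y then 1 else 0)"

definition mmul :: "'x::finite mat \<Rightarrow> 'x mat \<Rightarrow> 'x mat" where
  "mmul M N = (\<lambda>x y. \<Sum>z\<in>UNIV. M x z * N z y)"

definition schur :: "'x mat \<Rightarrow> 'x mat \<Rightarrow> 'x mat" where
  "schur M N = (\<lambda>x y. M x y * N x y)"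

definition smul :: "complex \<Rightarrow> 'x mat \<Rightarrow> 'x mat" where
  "smul c M = (\<lambda>x y. c * M x y)"

definition tsmul :: "complex \<Rightarrow> 'x tensor \<Rightarrow> 'x tensor" where
  "tsmul c T = (\<lambda>x y z. c * T x y z)"

definition rel_of :: "'x mat \<Rightarrow> ('x \<times> 'x) set" where
  "rel_of M = {(x, y). M x y \<noteq> 0}"

definition intersection_number :: "(nat \<Rightarrow> ('x \<times> 'x) set) \<Rightarrow> nat \<Rightarrow> nat \<Rightarrow> nat \<Rightarrow> nat" where
  "intersection_number R i j k =
     (let p = (SOME p. p \<in> R k) in card {z. (fst p, z) \<in> R i \<and> (z, snd p) \<in> R j})"

definition sym_assoc_scheme :: "nat \<Rightarrow> (nat \<Rightarrow> ('x::finite \<times> 'x) set) \<Rightarrow> bool" where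
  "sym_assoc_scheme d R \<longleftrightarrow>
     (\<forall>i\<le>d. R i \<noteq> {}) \<and>
     (\<forall>i\<le>d. \<forall>j\<le>d. i \<noteq> j \<longrightarrow> R i \<inter> R j = {}) \<and>
     (\<Union>i\<le>d. R i) = UNIV \<and>
     R 0 = Id \<and>
     (\<forall>i\<le>d. sym (R i)) \<and>
     (\<forall>i\<le>d. \<forall>j\<le>d. \<forall>k\<le>d. \<forall>x y x' y'. (x, y) \<in> R k \<longrightarrow> (x', y') \<in> R k \<longrightarrow>
        card {z. (x, z) \<in> R i \<and> (z, y) \<in> R j} = card {z. (x', z) \<in> R i \<and> (z, y') \<in> R j})"

definition bose_mesner :: "nat \<Rightarrow> (nat \<Rightarrow> ('x::finite \<times> 'x) set) \<Rightarrow> 'x mat set" where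
  "bose_mesner d R = {M. \<exists>c. M = (\<Sum>i\<le>d. smul (c i) (adj (R i)))}"

text \<open>Primitive (= minimal nonzero) idempotents of the commutative algebra.\<close>
definition prim_idem :: "nat \<Rightarrow> (nat \<Rightarrow> ('x::finite \<times> 'x) set) \<Rightarrow> 'x mat \<Rightarrow> bool" where
  "prim_idem d R E \<longleftrightarrow> E \<in> bose_mesner d R \<and> mmul E E = E \<and> E \<noteq> 0 \<and>
     (\<forall>F\<in>bose_mesner d R. mmul F F = F \<longrightarrow> mmul E F = E \<or> mmul E F = 0)"

definition adj_ordering :: "nat \<Rightarrow> (nat \<Rightarrow> ('x::finite \<times> 'x) set) \<Rightarrow> (nat \<Rightarrow> 'x mat) \<Rightarrow> bool" where
  "adj_ordering d R A \<longleftrightarrow> bij_betw A {..d} ((\<lambda>i. adj (R i)) ` {..d})"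

definition idem_ordering :: "nat \<Rightarrow> (nat \<Rightarrow> ('x::finite \<times> 'x) set) \<Rightarrow> (nat \<Rightarrow> 'x mat) \<Rightarrow> bool" where
  "idem_ordering d R E \<longleftrightarrow> bij_betw E {..d} {F. prim_idem d R F}"

definition inum :: "(nat \<Rightarrow> 'x mat) \<Rightarrow> nat \<Rightarrow> nat \<Rightarrow> nat \<Rightarrow> nat" where
  "inum A i j k = intersection_number (\<lambda>l. rel_of (A l)) i j k"

definition eigP :: "nat \<Rightarrow> (nat \<Rightarrow> 'x mat) \<Rightarrow> (nat \<Rightarrow> 'x mat) \<Rightarrow> nat \<Rightarrow> nat \<Rightarrow> complex" where
  "eigP d A E j i = (THE c. \<exists>p. A i = (\<Sum>l\<le>d. smul (p l) (E l)) \<and> p j = c)"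

definition dualQ :: "nat \<Rightarrow> (nat \<Rightarrow> 'x::finite mat) \<Rightarrow> (nat \<Rightarrow> 'x mat) \<Rightarrow> nat \<Rightarrow> nat \<Rightarrow> complex" where
  "dualQ d A E j i = (THE c. \<exists>q. E i = smul (1 / of_nat (card (UNIV :: 'x set))) (\<Sum>l\<le>d. smul (q l) (A l)) \<and> q j = c)"

definition krein :: "nat \<Rightarrow> (nat \<Rightarrow> 'x::finite mat) \<Rightarrow> nat \<Rightarrow> nat \<Rightarrow> nat \<Rightarrow> complex" where
  "krein d E i j k = (THE c. \<exists>q. schur (E i) (E j) = smul (1 / of_nat (card (UNIV :: 'x set))) (\<Sum>l\<le>d. smul (q l) (E l)) \<and> q k = c)"

definition Delta :: "'x mat \<Rightarrow> 'x mat \<Rightarrow> 'x mat \<Rightarrow> 'x tensor" where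
  "Delta L M N = (\<lambda>x y z. L x z * M x y * N y z)"

definition Upsilon :: "'x::finite mat \<Rightarrow> 'x mat \<Rightarrow> 'x mat \<Rightarrow> 'x tensor" where
  "Upsilon L M N = (\<lambda>x y z. \<Sum>u\<in>UNIV. L x u * M y u * N z u)"

definition tspan :: "'x tensor set \<Rightarrow> 'x tensor set" where
  "tspan S = {T. \<exists>F c. finite F \<and> F \<subseteq> S \<and> T = (\<Sum>f\<in>F. tsmul (c f) f)}"

definition Delta_space :: "nat \<Rightarrow> (nat \<Rightarrow> ('x::finite \<times> 'x) set) \<Rightarrow> 'x tensor set" where
  "Delta_space d R = tspan {Delta L M N | L M N.
     L \<in> bose_mesner d R \<and> M \<in> bose_mesner d R \<and> N \<in> bose_mesner d R}"

definition Upsilon_space :: "nat \<Rightarrow> (nat \<Rightarrow> ('x::finite \<times> 'x) set) \<Rightarrow> 'x tensor set" where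
  "Upsilon_space d R = tspan {Upsilon L M N | L M N.
     L \<in> bose_mesner d R \<and> M \<in> bose_mesner d R \<and> N \<in> bose_mesner d R}"

definition triply_regular where
  "triply_regular d R \<longleftrightarrow> Upsilon_space d R \<subseteq> Delta_space d R"

definition dually_triply_regular where
  "dually_triply_regular d R \<longleftrightarrow> Delta_space d R \<subseteq> Upsilon_space d R"

definition exactly_triply_regular where
  "exactly_triply_regular d R \<longleftrightarrow> triply_regular d R \<and> dually_triply_regular d R"

definition cpos :: "complex \<Rightarrow> bool" where
  "cpos c \<longleftrightarrow> Im c = 0 \<and> 0 < Re c"

definition krein_support :: "nat \<Rightarrow> (nat \<Rightarrow> 'x::finite mat) \<Rightarrow> (nat \<times> nat \<times> nat) set" where
  "krein_support d E = {(r, s, t). r \<le> d \<and> s \<le> d \<and> t \<le> d \<and> cpos (krein d E r s t)}"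

definition dw_param :: "nat \<Rightarrow> (nat \<Rightarrow> 'x::finite mat) \<Rightarrow> (nat \<Rightarrow> 'x mat) \<Rightarrow>
    nat \<Rightarrow> nat \<Rightarrow> nat \<Rightarrow> nat \<Rightarrow> nat \<Rightarrow> nat \<Rightarrow> complex" where
  "dw_param d A E i j k r s t =
     (if (r, s, t) \<in> krein_support d E then
        (THE c. \<exists>\<sigma>. Delta (A i) (A j) (A k) =
            (\<Sum>(r', s', t')\<in>krein_support d E. tsmul (\<sigma> (r', s', t')) (Upsilon (E r') (E s') (E t')))
          \<and> \<sigma> (r, s, t) = c)
      else 0)"

definition coord :: "nat \<Rightarrow> (nat \<Rightarrow> 'x mat) \<Rightarrow> 'x mat \<Rightarrow> nat \<Rightarrow> complex" where
  "coord d B M k = (THE c. \<exists>a. M = (\<Sum>l\<le>d. smul (a l) (B l)) \<and> a k = c)"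

definition kappa :: "nat \<Rightarrow> (nat \<Rightarrow> 'x mat) \<Rightarrow> (nat \<Rightarrow> 'y mat) \<Rightarrow> 'x mat \<Rightarrow> 'y mat" where
  "kappa d A A' M = (\<Sum>i\<le>d. smul (coord d A M i) (A' i))"

end

theory Submission
  imports Defs
begin

text \<open>
  The primitive idempotents E_r are real, symmetric and pairwise orthogonal, so the tensors
  Upsilon(E_r, E_s, E_t) are pairwise orthogonal, and the squared norm of Upsilon(E_r, E_s, E_t) is
  a positive multiple of the Krein parameter q_rs^t. Hence the Delta--Wye expansion of a tensor is
  unique and supported exactly on the triples with q_rs^t > 0.

  Summing Delta(A_i, A_j, A_k) over all i, j, k gives the all-ones tensor, which is
  |X|^2 Upsilon(E_0, E_0, E_0) for the trivial idempotent E_0 = J/|X|; summing only over j, k and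
  contracting the middle index gives |X| A_i = sum_r (sum_{j,k} sigma^{i,j,k}_{r,0,r}) E_r. So the
  Delta--Wye parameters determine |X|, the position of E_0 and the eigenmatrix P. Two schemes with a
  common P are linked by a map kappa that fixes coordinates with respect to both bases A and E; it
  therefore respects the ordinary product (diagonal in the basis E) and the Schur product (diagonal
  in the basis A), and all parameters, being coefficients of such products, agree.
\<close>

lemma sum_fun_apply [simp]: "(\<Sum>i\<in>S. f i) x = (\<Sum>i\<in>S. f i x)"
  by (induction S rule: infinite_finite_induct) auto

lemma smul_apply [simp]: "smul c M x y = c * M x y"
  by (simp add: smul_def)

lemma tsmul_apply [simp]: "tsmul c T x y z = c * T x y z"
  by (simp add: tsmul_def)

lemma schur_apply [simp]: "schur M N x y = M x y * N x y"
  by (simp add: schur_def)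

lemma mmul_apply: "mmul M N x y = (\<Sum>z\<in>UNIV. M x z * N z y)"
  by (simp add: mmul_def)

lemma Delta_apply [simp]: "Delta L M N x y z = L x z * M x y * N y z"
  by (simp add: Delta_def)

lemma Upsilon_apply: "Upsilon L M N x y z = (\<Sum>u\<in>UNIV. L x u * M y u * N z u)"
  by (simp add: Upsilon_def)

lemma smul_eq_zeroD: "smul c M = 0 \<Longrightarrow> M \<noteq> 0 \<Longrightarrow> c = 0"
  by (auto simp: fun_eq_iff)

lemma mmul_sum_left: "mmul (\<Sum>i\<in>S. f i) N = (\<Sum>i\<in>S. mmul (f i) N)"
  by (auto simp: fun_eq_iff mmul_def sum_distrib_right intro: sum.swap)

lemma mmul_sum_right: "mmul M (\<Sum>i\<in>S. f i) = (\<Sum>i\<in>S. mmul M (f i))"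
  by (auto simp: fun_eq_iff mmul_def sum_distrib_left intro: sum.swap)

lemma mmul_smul_left: "mmul (smul c M) N = smul c (mmul M N)"
  by (auto simp: fun_eq_iff mmul_def sum_distrib_left mult.assoc)

lemma mmul_smul_right: "mmul M (smul c N) = smul c (mmul M N)"
  by (auto simp: fun_eq_iff mmul_def sum_distrib_left mult.left_commute)

lemma mmul_zero_right [simp]: "mmul M 0 = 0"
  by (simp add: fun_eq_iff mmul_def)

lemma mmul_assoc: "mmul (mmul L M) N = mmul L (mmul M N)"
  by (auto simp: fun_eq_iff mmul_def sum_distrib_left sum_distrib_right mult.assoc intro: sum.swap)

interpretation mat: vector_space "smul :: complex \<Rightarrow> 'x mat \<Rightarrow> 'x mat"
  by unfold_locales (auto simp: smul_def fun_eq_iff algebra_simps)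

definition lincombs :: "nat \<Rightarrow> (nat \<Rightarrow> 'x mat) \<Rightarrow> 'x mat set" where
  "lincombs d B = {M. \<exists>c. M = (\<Sum>i\<le>d. smul (c i) (B i))}"

definition lin_indep :: "nat \<Rightarrow> (nat \<Rightarrow> 'x mat) \<Rightarrow> bool" where
  "lin_indep d B \<longleftrightarrow> (\<forall>c. (\<Sum>l\<le>d. smul (c l) (B l)) = 0 \<longrightarrow> (\<forall>l\<le>d. c l = 0))"

lemma lincomb_diff:
  "(\<Sum>l\<le>d. smul (a l) (B l)) - (\<Sum>l\<le>d. smul (b l) (B l)) = (\<Sum>l\<le>d. smul (a l - b l) (B l))"
  by (auto simp: fun_eq_iff algebra_simps sum_subtractf)

lemma smul_lincomb: "smul s (\<Sum>l\<le>d. smul (q l) (B l)) = (\<Sum>l\<le>d. smul (s * q l) (B l))"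
  by (auto simp: fun_eq_iff sum_distrib_left mult.assoc)

lemma lincomb_lincomb:
  "(\<Sum>r\<le>d. smul (a r) (\<Sum>i\<le>e. smul (b r i) (B i))) = (\<Sum>i\<le>e. smul (\<Sum>r\<le>d. a r * b r i) (B i))"
  by (auto simp: fun_eq_iff sum_distrib_left sum_distrib_right mult.assoc intro: sum.swap)

lemma lincomb_indicator: "j \<le> (d::nat) \<Longrightarrow> (\<Sum>r\<le>d. smul (of_bool (r = j)) (B r)) = B j"
  by (intro ext) (simp add: of_bool_def if_distrib[of "\<lambda>c. c * _"] cong: if_cong)

lemma lin_indep_coeff_eq:
  assumes "lin_indep d B" "(\<Sum>l\<le>d. smul (a l) (B l)) = (\<Sum>l\<le>d. smul (b l) (B l))" "k \<le> d"
  shows "a k = b k"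
proof -
  have "(\<Sum>l\<le>d. smul (a l - b l) (B l)) = 0"
    using assms(2) lincomb_diff[of a B d b] by simp
  then show ?thesis
    using assms(1,3) unfolding lin_indep_def by force
qed

lemma the_lincomb_coeff:
  assumes "lin_indep d B" "M = (\<Sum>l\<le>d. smul (a l) (B l))" "k \<le> d"
  shows "(THE c. \<exists>a. M = (\<Sum>l\<le>d. smul (a l) (B l)) \<and> a k = c) = a k"
  by (rule the_equality) (use assms lin_indep_coeff_eq[OF assms(1) _ assms(3)] in auto)

lemma the_scaled_lincomb_coeff:
  assumes "lin_indep d B" "M = (\<Sum>l\<le>d. smul (a l) (B l))" "k \<le> d" "s \<noteq> 0"
  shows "(THE c. \<exists>q. M = smul s (\<Sum>l\<le>d. smul (q l) (B l)) \<and> q k = c) = a k / s"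
proof (rule the_equality)
  show "\<exists>q. M = smul s (\<Sum>l\<le>d. smul (q l) (B l)) \<and> q k = a k / s"
    using assms by (intro exI[of _ "\<lambda>l. a l / s"]) (simp add: smul_lincomb)
next
  fix c
  assume "\<exists>q. M = smul s (\<Sum>l\<le>d. smul (q l) (B l)) \<and> q k = c"
  then obtain q where q: "M = (\<Sum>l\<le>d. smul (s * q l) (B l))" "q k = c"
    by (auto simp: smul_lincomb)
  have "s * q k = a k"
    using lin_indep_coeff_eq[OF assms(1) _ assms(3), of "\<lambda>l. s * q l" a] q(1) assms(2) by simp
  with q(2) assms(4) show "c = a k / s"
    by (simp add: field_simps)
qed

lemma coord_lincomb:
  "lin_indep d B \<Longrightarrow> k \<le> d \<Longrightarrow> coord d B (\<Sum>l\<le>d. smul (a l) (B l)) k = a k"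
  unfolding coord_def by (rule the_lincomb_coeff[OF _ refl])

lemma lincombs_eq_span:
  assumes "inj_on B {..d}"
  shows "lincombs d B = mat.span (B ` {..d})"
proof -
  have "mat.span (B ` {..d}) = range (\<lambda>u. \<Sum>v\<in>B ` {..d}. smul (u v) v)"
    by (rule mat.span_finite) simp
  also have "\<dots> = range (\<lambda>u. \<Sum>i\<le>d. smul (u (B i)) (B i))"
    using sum.reindex[OF assms, of "\<lambda>v. smul (_ v) v"] by (simp add: comp_def)
  also have "\<dots> = lincombs d B"
  proof (intro equalityI subsetI)
    fix M
    assume "M \<in> lincombs d B"
    then obtain c where c: "M = (\<Sum>i\<le>d. smul (c i) (B i))"
      by (auto simp: lincombs_def)
    have "M = (\<Sum>i\<le>d. smul ((c \<circ> inv_into {..d} B) (B i)) (B i))"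
      unfolding c using assms by (intro sum.cong) auto
    then show "M \<in> range (\<lambda>u. \<Sum>i\<le>d. smul (u (B i)) (B i))"
      by blast
  qed (auto simp: lincombs_def)
  finally show ?thesis ..
qed

lemma lincombs_reindex:
  assumes "inj_on A {..d}" "inj_on B {..d}" "A ` {..d} = B ` {..d}"
  shows "lincombs d A = lincombs d B"
  unfolding lincombs_eq_span[OF assms(1)] lincombs_eq_span[OF assms(2)] assms(3) ..

lemma lin_indep_imp_independent:
  assumes "inj_on B {..d}" "lin_indep d B"
  shows "mat.independent (B ` {..d})"
proof
  assume "mat.dependent (B ` {..d})"
  then obtain u v where uv: "v \<in> B ` {..d}" "u v \<noteq> 0" "(\<Sum>w\<in>B ` {..d}. smul (u w) w) = 0"
    by (auto simp: mat.dependent_finite)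
  have "(\<Sum>l\<le>d. smul (u (B l)) (B l)) = 0"
    using uv(3) sum.reindex[OF assms(1), of "\<lambda>w. smul (u w) w"] by (simp add: comp_def)
  then show False
    using assms(2) uv(1,2) unfolding lin_indep_def by auto
qed

lemma sum_cnj_self_eq_0:
  fixes f :: "'a \<Rightarrow> complex"
  assumes "finite S" "(\<Sum>y\<in>S. f y * cnj (f y)) = 0" "y \<in> S"
  shows "f y = 0"
proof -
  have sq: "(\<Sum>y\<in>S. f y * cnj (f y)) = of_real (\<Sum>y\<in>S. (norm (f y))\<^sup>2)"
    by (simp only: complex_norm_square[symmetric] of_real_sum)
  have "complex_of_real (\<Sum>y\<in>S. (norm (f y))\<^sup>2) = 0"
    by (simp only: sq[symmetric] assms(2))
  then have "(\<Sum>y\<in>S. (norm (f y))\<^sup>2) = 0"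
    by (simp only: of_real_eq_0_iff)
  then show ?thesis
    using sum_nonneg_eq_0_iff[OF assms(1), of "\<lambda>y. (norm (f y))\<^sup>2"] assms(3) by simp
qed

definition ones :: "'x mat" where
  "ones = (\<lambda>x y. 1)"

definition cnj_mat :: "'x mat \<Rightarrow> 'x mat" where
  "cnj_mat M = (\<lambda>x y. cnj (M x y))"

lemma cnj_mat_cnj_mat [simp]: "cnj_mat (cnj_mat M) = M"
  by (simp add: cnj_mat_def)

lemma cnj_mat_eq_0_iff [simp]: "cnj_mat M = 0 \<longleftrightarrow> M = 0"
  by (auto simp: cnj_mat_def fun_eq_iff)

lemma mmul_cnj_mat: "mmul (cnj_mat M) (cnj_mat N) = cnj_mat (mmul M N)"
  by (auto simp: fun_eq_iff mmul_def cnj_mat_def)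

lemma mmul_ones_ones: "mmul ones (ones :: 'x::finite mat) = smul (of_nat (card (UNIV :: 'x set))) ones"
  by (simp add: fun_eq_iff mmul_apply ones_def)

section \<open>The Bose--Mesner algebra\<close>

locale matrix_scheme =
  fixes d :: nat and A :: "nat \<Rightarrow> 'x::finite mat"
  assumes A_01: "i \<le> d \<Longrightarrow> A i x y = 0 \<or> A i x y = 1"
    and A_disjoint: "i \<le> d \<Longrightarrow> l \<le> d \<Longrightarrow> i \<noteq> l \<Longrightarrow> A i x y = 0 \<or> A l x y = 0"
    and A_cover: "\<exists>i\<le>d. A i x y = 1"
    and A_nonzero: "i \<le> d \<Longrightarrow> A i \<noteq> 0"
    and A_sym: "i \<le> d \<Longrightarrow> A i x y = A i y x"
    and A_mmul_closed: "i \<le> d \<Longrightarrow> j \<le> d \<Longrightarrow> mmul (A i) (A j) \<in> lincombs d A"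
begin

abbreviation BM :: "'x mat set" where
  "BM \<equiv> lincombs d A"

lemma A_entry_one:
  assumes "i \<le> d"
  obtains x y where "A i x y = 1"
proof -
  from A_nonzero[OF assms] obtain x y where "A i x y \<noteq> 0"
    by (auto simp: fun_eq_iff)
  with A_01[OF assms] that show ?thesis
    by blast
qed

lemma lincomb_A_apply:
  assumes "i \<le> d" "A i x y = 1"
  shows "(\<Sum>l\<le>d. smul (c l) (A l)) x y = c i"
proof -
  have "(\<Sum>l\<in>{..d}-{i}. c l * A l x y) = 0"
    using A_disjoint[OF assms(1)] assms by (intro sum.neutral) force
  then show ?thesis
    using assms by (simp add: sum.remove[of _ i])
qed

lemma A_lin_indep: "lin_indep d A"
  unfolding lin_indep_def
proof (intro allI impI)
  fix c l
  assume "(\<Sum>l\<le>d. smul (c l) (A l)) = 0" "l \<le> d"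
  moreover obtain x y where "A l x y = 1"
    using A_entry_one[OF \<open>l \<le> d\<close>] .
  ultimately show "c l = 0"
    using lincomb_A_apply[of l x y c] by simp
qed

lemma A_inj: "inj_on A {..d}"
proof
  fix i l
  assume "i \<in> {..d}" "l \<in> {..d}" "A i = A l"
  then show "i = l"
    using A_entry_one[of i] A_disjoint[of i l] by (metis atMost_iff zero_neq_one)
qed

lemma BM_eq_span: "BM = mat.span (A ` {..d})"
  by (rule lincombs_eq_span[OF A_inj])

lemma A_in_BM: "i \<le> d \<Longrightarrow> A i \<in> BM"
  unfolding BM_eq_span by (rule mat.span_base) auto

lemma BM_smul: "M \<in> BM \<Longrightarrow> smul c M \<in> BM"
  unfolding BM_eq_span by (rule mat.span_scale)

lemma BM_sum: "(\<And>i. i \<in> S \<Longrightarrow> f i \<in> BM) \<Longrightarrow> sum f S \<in> BM"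
  unfolding BM_eq_span by (rule mat.span_sum)

lemma BM_obtain:
  assumes "M \<in> BM"
  obtains c where "M = (\<Sum>l\<le>d. smul (c l) (A l))"
  using assms by (auto simp: lincombs_def)

lemma sum_A_apply: "(\<Sum>i\<le>d. A i x y) = 1"
proof -
  obtain i where "i \<le> d" "A i x y = 1"
    using A_cover by blast
  from lincomb_A_apply[OF this, of "\<lambda>_. 1"] show ?thesis
    by simp
qed

lemma ones_in_BM: "ones \<in> BM"
proof -
  have "ones = (\<Sum>i\<le>d. A i)"
    by (simp add: fun_eq_iff sum_A_apply ones_def)
  then show ?thesis
    using BM_sum[of "{..d}" A] A_in_BM by simp
qed

lemma BM_mmul:
  assumes "M \<in> BM" "N \<in> BM"
  shows "mmul M N \<in> BM"
proof -
  obtain a b where ab: "M = (\<Sum>l\<le>d. smul (a l) (A l))" "N = (\<Sum>l\<le>d. smul (b l) (A l))"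
    using assms by (auto simp: lincombs_def)
  show ?thesis
    unfolding ab mmul_sum_left mmul_sum_right mmul_smul_left mmul_smul_right
    by (auto intro!: BM_sum BM_smul A_mmul_closed)
qed

lemma schur_lincomb_A:
  "schur (\<Sum>l\<le>d. smul (a l) (A l)) (\<Sum>l\<le>d. smul (b l) (A l)) = (\<Sum>l\<le>d. smul (a l * b l) (A l))"
proof (intro ext)
  fix x y
  obtain i where "i \<le> d" "A i x y = 1"
    using A_cover by blast
  then show "schur (\<Sum>l\<le>d. smul (a l) (A l)) (\<Sum>l\<le>d. smul (b l) (A l)) x y
      = (\<Sum>l\<le>d. smul (a l * b l) (A l)) x y"
    by (simp only: schur_apply lincomb_A_apply)
qed

lemma BM_schur: "M \<in> BM \<Longrightarrow> N \<in> BM \<Longrightarrow> schur M N \<in> BM"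
  by (auto simp: lincombs_def schur_lincomb_A)

lemma BM_sym: "M \<in> BM \<Longrightarrow> M x y = M y x"
  using A_sym by (auto simp: lincombs_def intro!: sum.cong)

lemma BM_mmul_comm:
  assumes "M \<in> BM" "N \<in> BM"
  shows "mmul M N = mmul N M"
proof (intro ext)
  fix x y
  have "mmul M N x y = mmul M N y x"
    using BM_sym[OF BM_mmul[OF assms]] .
  also have "\<dots> = mmul N M x y"
    unfolding mmul_apply using BM_sym[OF assms(1)] BM_sym[OF assms(2)] by (simp add: mult.commute)
  finally show "mmul M N x y = mmul N M x y" .
qed

lemma BM_cnj_mat:
  assumes "M \<in> BM"
  shows "cnj_mat M \<in> BM"
proof -
  obtain c where c: "M = (\<Sum>l\<le>d. smul (c l) (A l))"
    using assms BM_obtain by blast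
  have "cnj (A l x y) = A l x y" if "l \<le> d" for l x y
    using A_01[OF that, of x y] by auto
  then have "cnj_mat M = (\<Sum>l\<le>d. smul (cnj (c l)) (A l))"
    by (auto simp: fun_eq_iff c cnj_mat_def intro!: sum.cong)
  then show ?thesis
    by (auto simp: lincombs_def)
qed

text \<open>(J M)(x, y) depends only on y and (M J)(x, y) only on x, so commutativity makes J M
  constant.\<close>

lemma mmul_ones_BM:
  assumes "M \<in> BM"
  obtains c where "mmul ones M = smul c ones"
proof
  have "mmul ones M = mmul M ones"
    using BM_mmul_comm[OF ones_in_BM assms] .
  then have "mmul ones M undefined y = mmul M ones undefined y" for y
    by simp
  then have "(\<Sum>z\<in>UNIV. M z y) = (\<Sum>z\<in>UNIV. M undefined z)" for y
    by (simp add: mmul_apply ones_def)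
  then show "mmul ones M = smul (\<Sum>z\<in>UNIV. M undefined z) ones"
    by (simp add: fun_eq_iff mmul_apply ones_def)
qed

lemma inum_eq_coeff:
  assumes "i \<le> d" "j \<le> d" "k \<le> d" and p: "mmul (A i) (A j) = (\<Sum>l\<le>d. smul (p l) (A l))"
  shows "of_nat (inum A i j k) = p k"
proof -
  define q where "q = (SOME q. q \<in> rel_of (A k))"
  obtain x0 y0 where "A k x0 y0 = 1"
    using A_entry_one[OF assms(3)] .
  then have "(x0, y0) \<in> rel_of (A k)"
    by (simp add: rel_of_def)
  then have "q \<in> rel_of (A k)"
    unfolding q_def by (rule someI)
  then have q: "A k (fst q) (snd q) = 1"
    using A_01[OF assms(3), of "fst q" "snd q"] by (auto simp: rel_of_def)
  have "of_nat (inum A i j k)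
      = (\<Sum>z\<in>UNIV. of_bool ((fst q, z) \<in> rel_of (A i) \<and> (z, snd q) \<in> rel_of (A j)) :: complex)"
    by (simp add: inum_def intersection_number_def q_def Let_def)
  also have "\<dots> = mmul (A i) (A j) (fst q) (snd q)"
    unfolding mmul_apply
  proof (intro sum.cong refl)
    fix z
    show "of_bool ((fst q, z) \<in> rel_of (A i) \<and> (z, snd q) \<in> rel_of (A j)) = A i (fst q) z * A j z (snd q)"
      using A_01[OF assms(1), of "fst q" z] A_01[OF assms(2), of z "snd q"] by (auto simp: rel_of_def)
  qed
  also have "\<dots> = p k"
    using p lincomb_A_apply[OF assms(3) q] by simp
  finally show ?thesis .
qed

lemma lincomb_coord: "M \<in> BM \<Longrightarrow> M = (\<Sum>i\<le>d. smul (coord d A M i) (A i))"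
  by (auto elim!: BM_obtain intro!: sum.cong simp: coord_lincomb[OF A_lin_indep])

lemma kappa_lincomb_A: "kappa d A A' (\<Sum>i\<le>d. smul (a i) (A i)) = (\<Sum>i\<le>d. smul (a i) (A' i))"
  unfolding kappa_def by (intro sum.cong refl) (simp add: coord_lincomb[OF A_lin_indep])

lemma kappa_A: "i \<le> d \<Longrightarrow> kappa d A A' (A i) = A' i"
  using kappa_lincomb_A[of A' "\<lambda>l. of_bool (l = i)"] by (simp add: lincomb_indicator)

lemma kappa_lincomb:
  assumes "\<And>r. r \<le> e \<Longrightarrow> F r \<in> BM"
  shows "kappa d A A' (\<Sum>r\<le>e. smul (a r) (F r)) = (\<Sum>r\<le>e. smul (a r) (kappa d A A' (F r)))"
proof -
  have "(\<Sum>r\<le>e. smul (a r) (F r)) = (\<Sum>r\<le>e. smul (a r) (\<Sum>i\<le>d. smul (coord d A (F r) i) (A i)))"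
    using assms lincomb_coord by (intro sum.cong) auto
  then show ?thesis
    unfolding kappa_def[of d A A' "F _"]
    by (simp only: lincomb_lincomb kappa_lincomb_A)
qed

end

section \<open>Primitive idempotents\<close>

definition primitive_idempotent :: "nat \<Rightarrow> (nat \<Rightarrow> 'x::finite mat) \<Rightarrow> 'x mat \<Rightarrow> bool" where
  "primitive_idempotent d A F \<longleftrightarrow> F \<in> lincombs d A \<and> mmul F F = F \<and> F \<noteq> 0 \<and>
     (\<forall>G\<in>lincombs d A. mmul G G = G \<longrightarrow> mmul F G = F \<or> mmul F G = 0)"

context matrix_scheme
begin

lemma primitive_eq_or_orth:
  assumes "primitive_idempotent d A F" "primitive_idempotent d A G"
  shows "F = G \<or> mmul F G = 0"
proof -
  have "mmul F G = mmul G F"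
    using assms unfolding primitive_idempotent_def by (intro BM_mmul_comm) auto
  moreover have "mmul F G = F \<or> mmul F G = 0" "mmul G F = G \<or> mmul G F = 0"
    using assms unfolding primitive_idempotent_def by blast+
  ultimately show ?thesis
    by auto
qed

lemma primitive_cnj_mat:
  assumes F: "primitive_idempotent d A F"
  shows "primitive_idempotent d A (cnj_mat F)"
  unfolding primitive_idempotent_def
proof (intro conjI ballI impI)
  show "cnj_mat F \<in> BM" "mmul (cnj_mat F) (cnj_mat F) = cnj_mat F" "cnj_mat F \<noteq> 0"
    using F BM_cnj_mat by (auto simp: mmul_cnj_mat primitive_idempotent_def)
  fix G
  assume "G \<in> BM" "mmul G G = G"
  then have "cnj_mat G \<in> BM" "mmul (cnj_mat G) (cnj_mat G) = cnj_mat G"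
    using BM_cnj_mat by (auto simp: mmul_cnj_mat)
  then have "mmul F (cnj_mat G) = F \<or> mmul F (cnj_mat G) = 0"
    using F unfolding primitive_idempotent_def by blast
  then show "mmul (cnj_mat F) G = cnj_mat F \<or> mmul (cnj_mat F) G = 0"
    by (metis cnj_mat_cnj_mat cnj_mat_eq_0_iff mmul_cnj_mat)
qed

text \<open>F and its conjugate are primitive; were they different they would be orthogonal, but the
  diagonal of F times its conjugate consists of the squared row norms of the symmetric matrix F.\<close>

lemma primitive_real:
  assumes F: "primitive_idempotent d A F"
  shows "cnj (F x y) = F x y"
proof -
  have "F = cnj_mat F"
  proof (rule ccontr)
    assume "F \<noteq> cnj_mat F"
    then have orth: "mmul F (cnj_mat F) = 0"
      using primitive_eq_or_orth[OF F primitive_cnj_mat[OF F]] by blast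
    have "F x y = 0" for x y
    proof -
      have "(\<Sum>z\<in>UNIV. F x z * cnj (F x z)) = mmul F (cnj_mat F) x x"
        unfolding mmul_apply cnj_mat_def using F BM_sym[of F] by (simp add: primitive_idempotent_def)
      with orth show ?thesis
        using sum_cnj_self_eq_0[of UNIV "F x" y] by simp
    qed
    then show False
      using F by (auto simp: primitive_idempotent_def fun_eq_iff)
  qed
  then show ?thesis
    by (metis cnj_mat_def)
qed

lemma primitive_ones: "primitive_idempotent d A (smul (1 / of_nat (card (UNIV :: 'x set))) ones)"
proof -
  let ?J = "smul (1 / of_nat (card (UNIV :: 'x set))) (ones :: 'x mat)"
  have "mmul ?J ?J = ?J"
    by (simp only: mmul_smul_left mmul_smul_right mmul_ones_ones) (simp add: fun_eq_iff)
  moreover have "?J \<noteq> 0"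
    by (simp add: ones_def fun_eq_iff)
  moreover have "mmul ?J G = ?J \<or> mmul ?J G = 0" if G: "G \<in> BM" "mmul G G = G" for G
  proof -
    obtain c where c: "mmul ones G = smul c ones"
      using mmul_ones_BM[OF G(1)] .
    have "smul c ones = mmul ones (mmul G G)"
      using G c by simp
    also have "\<dots> = smul (c * c) ones"
      by (simp add: mmul_assoc[symmetric] c mmul_smul_left fun_eq_iff)
    finally have "c * c = c"
      by (simp add: fun_eq_iff ones_def)
    then have "c = 0 \<or> c = 1"
      by (metis mult_cancel_right1 mult_eq_0_iff)
    then show ?thesis
      by (auto simp: mmul_smul_left c fun_eq_iff)
  qed
  ultimately show ?thesis
    using BM_smul ones_in_BM unfolding primitive_idempotent_def by blast
qed

end

locale scheme_idempotents = matrix_scheme d A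
  for d :: nat and A :: "nat \<Rightarrow> 'x::finite mat" +
  fixes E :: "nat \<Rightarrow> 'x mat"
  assumes E_bij: "bij_betw E {..d} {F. primitive_idempotent d A F}"
begin

lemma E_primitive: "j \<le> d \<Longrightarrow> primitive_idempotent d A (E j)"
  using E_bij by (auto dest: bij_betw_apply)

lemma E_in_BM: "j \<le> d \<Longrightarrow> E j \<in> BM"
  using E_primitive primitive_idempotent_def by blast

lemma E_nonzero: "j \<le> d \<Longrightarrow> E j \<noteq> 0"
  using E_primitive primitive_idempotent_def by blast

lemma E_inj: "inj_on E {..d}"
  using E_bij bij_betw_imp_inj_on by blast

lemma primitive_eq_E: "primitive_idempotent d A F \<Longrightarrow> \<exists>j\<le>d. F = E j"
  using E_bij by (auto simp: bij_betw_def)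

lemma E_idem: "j \<le> d \<Longrightarrow> mmul (E j) (E j) = E j"
  using E_primitive primitive_idempotent_def by blast

lemma E_mmul_E:
  assumes "j \<le> d" "k \<le> d"
  shows "mmul (E j) (E k) = (if j = k then E j else 0)"
proof (cases "j = k")
  case False
  then have "E j \<noteq> E k"
    using assms E_inj by (auto dest: inj_onD)
  then show ?thesis
    using primitive_eq_or_orth[OF E_primitive E_primitive, OF assms] False by simp
qed (simp add: E_idem assms)

lemma E_real: "j \<le> d \<Longrightarrow> cnj (E j x y) = E j x y"
  using primitive_real[OF E_primitive] .

lemma E_sym: "j \<le> d \<Longrightarrow> E j x y = E j y x"
  using BM_sym E_in_BM by blast

lemma E_mmul_lincomb: "r \<le> d \<Longrightarrow> mmul (E r) (\<Sum>s\<le>d. smul (b s) (E s)) = smul (b r) (E r)"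
  by (simp add: mmul_sum_right mmul_smul_right E_mmul_E if_distrib[of "smul _"] cong: if_cong)

lemma E_lin_indep: "lin_indep d E"
  unfolding lin_indep_def
proof (intro allI impI)
  fix c k
  assume c: "(\<Sum>l\<le>d. smul (c l) (E l)) = 0" and k: "k \<le> d"
  have "smul (c k) (E k) = mmul (E k) 0"
    using E_mmul_lincomb[OF k, of c] c by simp
  then show "c k = 0"
    using smul_eq_zeroD E_nonzero[OF k] by simp
qed

text \<open>Dimension count: an element of BM outside the span of the d + 1 independent E_j would
  give d + 2 independent elements of the span of the d + 1 matrices A_i.\<close>

lemma BM_subset_span_E: "BM \<subseteq> mat.span (E ` {..d})"
proof
  fix M
  assume M: "M \<in> BM"
  show "M \<in> mat.span (E ` {..d})"
  proof (rule ccontr)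
    assume M_notin: "M \<notin> mat.span (E ` {..d})"
    have ind: "mat.independent (insert M (E ` {..d}))"
      using M_notin lin_indep_imp_independent[OF E_inj E_lin_indep] by (intro mat.independent_insertI)
    have sub: "insert M (E ` {..d}) \<subseteq> mat.span (A ` {..d})"
      using M E_in_BM unfolding BM_eq_span by auto
    have "card (insert M (E ` {..d})) \<le> card (A ` {..d})"
      using mat.independent_span_bound[OF _ ind sub] by simp
    also have "\<dots> \<le> Suc d"
      using card_image_le[of "{..d}" A] by simp
    finally have "card (insert M (E ` {..d})) \<le> Suc d" .
    moreover have "M \<notin> E ` {..d}"
      using M_notin mat.span_base[of M "E ` {..d}"] by blast
    ultimately show False
      using card_image[OF E_inj] by simp
  qed
qed

lemma lincombs_E: "lincombs d E = BM"
  using BM_subset_span_E E_in_BM A_in_BM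
  unfolding lincombs_eq_span[OF E_inj] BM_eq_span mat.span_eq by blast

lemma BM_obtain_E:
  assumes "M \<in> BM"
  obtains a where "M = (\<Sum>l\<le>d. smul (a l) (E l))"
proof -
  have "M \<in> lincombs d E"
    using assms lincombs_E by simp
  then show ?thesis
    using that unfolding lincombs_def by blast
qed

lemma lincomb_E_mmul:
  "mmul (\<Sum>r\<le>d. smul (a r) (E r)) (\<Sum>s\<le>d. smul (b s) (E s)) = (\<Sum>r\<le>d. smul (a r * b r) (E r))"
  by (simp add: mmul_sum_left mmul_smul_left E_mmul_lincomb fun_eq_iff mult.assoc)

end

section \<open>Upsilon tensors and the Krein support\<close>

definition trace :: "'x::finite mat \<Rightarrow> complex" where
  "trace M = (\<Sum>x\<in>UNIV. M x x)"

definition tinner :: "'x::finite tensor \<Rightarrow> 'x tensor \<Rightarrow> complex" where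
  "tinner T U = (\<Sum>z\<in>UNIV. \<Sum>y\<in>UNIV. \<Sum>x\<in>UNIV. T x y z * cnj (U x y z))"

definition tnorm2 :: "'x::finite tensor \<Rightarrow> real" where
  "tnorm2 T = (\<Sum>z\<in>UNIV. \<Sum>y\<in>UNIV. \<Sum>x\<in>UNIV. (norm (T x y z))\<^sup>2)"

lemma tinner_self: "tinner T T = of_real (tnorm2 T)"
  unfolding tinner_def tnorm2_def by (simp only: complex_norm_square[symmetric] of_real_sum)

lemma tnorm2_nonneg: "tnorm2 T \<ge> 0"
  unfolding tnorm2_def by (intro sum_nonneg) auto

lemma tnorm2_eq_0_iff: "tnorm2 T = 0 \<longleftrightarrow> T = 0"
proof
  assume T: "tnorm2 T = 0"
  show "T = 0"
  proof (intro ext)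
    fix x y z
    have "(\<Sum>y\<in>UNIV. \<Sum>x\<in>UNIV. (norm (T x y z))\<^sup>2) = 0"
      using T sum_nonneg_eq_0_iff[of UNIV "\<lambda>z. \<Sum>y\<in>UNIV. \<Sum>x\<in>UNIV. (norm (T x y z))\<^sup>2"]
      by (simp add: tnorm2_def sum_nonneg)
    then have "(\<Sum>x\<in>UNIV. (norm (T x y z))\<^sup>2) = 0"
      using sum_nonneg_eq_0_iff[of UNIV "\<lambda>y. \<Sum>x\<in>UNIV. (norm (T x y z))\<^sup>2"] by (simp add: sum_nonneg)
    then show "T x y z = 0 x y z"
      using sum_nonneg_eq_0_iff[of UNIV "\<lambda>x. (norm (T x y z))\<^sup>2"] by simp
  qed
qed (simp add: tnorm2_def)

lemma sum_swap_outermost: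
  "(\<Sum>u\<in>U. \<Sum>v\<in>V. \<Sum>x\<in>X. g u v x) = (\<Sum>x\<in>X. \<Sum>u\<in>U. \<Sum>v\<in>V. g u v x)"
proof -
  have "(\<Sum>u\<in>U. \<Sum>v\<in>V. \<Sum>x\<in>X. g u v x) = (\<Sum>u\<in>U. \<Sum>x\<in>X. \<Sum>v\<in>V. g u v x)"
    by (rule sum.cong[OF refl], rule sum.swap)
  also have "\<dots> = (\<Sum>x\<in>X. \<Sum>u\<in>U. \<Sum>v\<in>V. g u v x)"
    by (rule sum.swap)
  finally show ?thesis .
qed

lemma tinner_sum_left: "tinner (\<Sum>i\<in>S. f i) U = (\<Sum>i\<in>S. tinner (f i) U)"
proof -
  have "tinner (\<Sum>i\<in>S. f i) U = (\<Sum>z\<in>UNIV. \<Sum>y\<in>UNIV. \<Sum>x\<in>UNIV. \<Sum>i\<in>S. f i x y z * cnj (U x y z))"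
    unfolding tinner_def by (simp add: sum_distrib_right)
  also have "\<dots> = (\<Sum>z\<in>UNIV. \<Sum>y\<in>UNIV. \<Sum>i\<in>S. \<Sum>x\<in>UNIV. f i x y z * cnj (U x y z))"
    by (intro sum.cong refl sum.swap)
  also have "\<dots> = (\<Sum>i\<in>S. tinner (f i) U)"
    unfolding tinner_def by (rule sum_swap_outermost)
  finally show ?thesis .
qed

lemma tinner_tsmul_left: "tinner (tsmul c T) U = c * tinner T U"
  unfolding tinner_def by (simp add: sum_distrib_left mult.assoc)

lemma tinner_Upsilon_expand:
  fixes a b c a' b' c' :: "'x::finite mat"
  shows "(\<Sum>z\<in>UNIV. \<Sum>y\<in>UNIV. \<Sum>x\<in>UNIV.
            (\<Sum>u\<in>UNIV. a x u * b y u * c z u) * (\<Sum>v\<in>UNIV. a' x v * b' y v * c' z v))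
   = (\<Sum>u\<in>UNIV. \<Sum>v\<in>UNIV.
        (\<Sum>x\<in>UNIV. a x u * a' x v) * (\<Sum>y\<in>UNIV. b y u * b' y v) * (\<Sum>z\<in>UNIV. c z u * c' z v))"
proof -
  let ?F = "\<lambda>x y z u v. a x u * a' x v * (b y u * b' y v) * (c z u * c' z v)"
  have "(\<Sum>x\<in>UNIV. a x u * a' x v) * (\<Sum>y\<in>UNIV. b y u * b' y v) * (\<Sum>z\<in>UNIV. c z u * c' z v)
     = (\<Sum>z\<in>UNIV. \<Sum>y\<in>UNIV. \<Sum>x\<in>UNIV. ?F x y z u v)" for u v
    by (simp add: sum_distrib_left sum_distrib_right)
  moreover have "(\<Sum>u\<in>UNIV. a x u * b y u * c z u) * (\<Sum>v\<in>UNIV. a' x v * b' y v * c' z v)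
     = (\<Sum>u\<in>UNIV. \<Sum>v\<in>UNIV. ?F x y z u v)" for x y z
    by (simp add: sum_product mult_ac)
  moreover have "(\<Sum>u\<in>UNIV. \<Sum>v\<in>UNIV. \<Sum>z\<in>UNIV. \<Sum>y\<in>UNIV. \<Sum>x\<in>UNIV. ?F x y z u v)
      = (\<Sum>z\<in>UNIV. \<Sum>y\<in>UNIV. \<Sum>x\<in>UNIV. \<Sum>u\<in>UNIV. \<Sum>v\<in>UNIV. ?F x y z u v)"
    by (subst sum_swap_outermost, rule sum.cong[OF refl], subst sum_swap_outermost,
        intro sum.cong refl sum_swap_outermost)
  ultimately show ?thesis
    by simp
qed

context scheme_idempotents
begin

text \<open>The index of the trivial idempotent J/|X|, which the paper calls E_0.\<close>

definition triv_idx :: nat where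
  "triv_idx = (SOME t. t \<le> d \<and> E t = smul (1 / of_nat (card (UNIV :: 'x set))) ones)"

lemma triv_idx_spec: "triv_idx \<le> d \<and> E triv_idx = smul (1 / of_nat (card (UNIV :: 'x set))) ones"
proof -
  have "\<exists>t. t \<le> d \<and> E t = smul (1 / of_nat (card (UNIV :: 'x set))) ones"
    using primitive_eq_E[OF primitive_ones] by (auto simp del: smul_apply)
  then show ?thesis
    unfolding triv_idx_def by (rule someI_ex)
qed

lemma triv_idx_le: "triv_idx \<le> d"
  using triv_idx_spec by blast

lemma E_triv_idx: "E triv_idx = smul (1 / of_nat (card (UNIV :: 'x set))) ones"
  using triv_idx_spec by blast

lemma sum_col_E: "s \<le> d \<Longrightarrow> (\<Sum>y\<in>UNIV. E s y u) = of_bool (s = triv_idx)"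
proof -
  assume s: "s \<le> d"
  have "mmul (E triv_idx) (E s) x u = (1 / of_nat (card (UNIV :: 'x set))) * (\<Sum>y\<in>UNIV. E s y u)" for x
    by (simp add: E_triv_idx mmul_apply ones_def sum_distrib_left)
  moreover have "mmul (E triv_idx) (E s) x u = of_bool (s = triv_idx) / of_nat (card (UNIV :: 'x set))" for x
    using E_mmul_E[OF triv_idx_le s] by (auto simp: E_triv_idx ones_def)
  ultimately show ?thesis
    by (simp add: field_simps)
qed

lemma trace_E:
  assumes j: "j \<le> d"
  shows "trace (E j) = of_real (\<Sum>x\<in>UNIV. \<Sum>y\<in>UNIV. (norm (E j x y))\<^sup>2)"
    and "(\<Sum>x\<in>UNIV. \<Sum>y\<in>UNIV. (norm (E j x y))\<^sup>2) > 0"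
proof -
  have "trace (E j) = (\<Sum>x\<in>UNIV. mmul (E j) (E j) x x)"
    by (simp add: trace_def E_idem[OF j])
  also have "\<dots> = (\<Sum>x\<in>UNIV. \<Sum>y\<in>UNIV. E j x y * cnj (E j x y))"
    unfolding mmul_apply using E_sym[OF j] E_real[OF j] by simp
  finally show "trace (E j) = of_real (\<Sum>x\<in>UNIV. \<Sum>y\<in>UNIV. (norm (E j x y))\<^sup>2)"
    by (simp only: complex_norm_square[symmetric] of_real_sum)
  obtain x0 y0 where "E j x0 y0 \<noteq> 0"
    using E_nonzero[OF j] by (auto simp: fun_eq_iff)
  then have "(\<Sum>y\<in>UNIV. (norm (E j x0 y))\<^sup>2) > 0"
    by (intro sum_pos2[of UNIV y0]) auto
  then show "(\<Sum>x\<in>UNIV. \<Sum>y\<in>UNIV. (norm (E j x y))\<^sup>2) > 0"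
    by (intro sum_pos2[of UNIV x0 "\<lambda>x. \<Sum>y\<in>UNIV. (norm (E j x y))\<^sup>2"]) (auto intro: sum_nonneg)
qed

abbreviation Ups :: "nat \<Rightarrow> nat \<Rightarrow> nat \<Rightarrow> 'x tensor" where
  "Ups r s t \<equiv> Upsilon (E r) (E s) (E t)"

lemma sum_E_mult_E:
  assumes "r \<le> d" "r' \<le> d"
  shows "(\<Sum>x\<in>UNIV. E r x u * E r' x v) = (if r = r' then E r u v else 0)"
proof -
  have "(\<Sum>x\<in>UNIV. E r x u * E r' x v) = mmul (E r) (E r') u v"
    unfolding mmul_apply using E_sym[OF assms(1)] by simp
  then show ?thesis
    using E_mmul_E[OF assms] by simp
qed

lemma tinner_Ups:
  assumes "r \<le> d" "s \<le> d" "t \<le> d" "r' \<le> d" "s' \<le> d" "t' \<le> d"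
  shows "tinner (Ups r s t) (Ups r' s' t') =
    (if r = r' \<and> s = s' \<and> t = t' then (\<Sum>u\<in>UNIV. \<Sum>v\<in>UNIV. E r u v * E s u v * E t u v) else 0)"
proof -
  have "tinner (Ups r s t) (Ups r' s' t') =
      (\<Sum>z\<in>UNIV. \<Sum>y\<in>UNIV. \<Sum>x\<in>UNIV. (\<Sum>u\<in>UNIV. E r x u * E s y u * E t z u)
                                     * (\<Sum>v\<in>UNIV. E r' x v * E s' y v * E t' z v))"
    unfolding tinner_def using assms(4-6) E_real by (simp add: Upsilon_apply)
  also have "\<dots> = (\<Sum>u\<in>UNIV. \<Sum>v\<in>UNIV. (if r = r' then E r u v else 0) * (if s = s' then E s u v else 0)
                                        * (if t = t' then E t u v else 0))"
    unfolding tinner_Upsilon_expand using sum_E_mult_E assms by simp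
  finally show ?thesis
    by (cases "r = r'"; cases "s = s'"; cases "t = t'") simp_all
qed

lemma krein_coeff:
  assumes "t \<le> d" "schur (E r) (E s) = (\<Sum>l\<le>d. smul (e l) (E l))"
  shows "krein d E r s t = of_nat (card (UNIV :: 'x set)) * e t"
  using the_scaled_lincomb_coeff[OF E_lin_indep assms(2,1), of "1 / of_nat (card (UNIV :: 'x set))"]
  unfolding krein_def by simp

lemma krein_times_trace:
  assumes r: "r \<le> d" and s: "s \<le> d" and t: "t \<le> d"
  shows "krein d E r s t * trace (E t) = of_nat (card (UNIV :: 'x set)) * tinner (Ups r s t) (Ups r s t)"
proof -
  obtain e where e: "schur (E r) (E s) = (\<Sum>l\<le>d. smul (e l) (E l))"
    using BM_obtain_E[OF BM_schur[OF E_in_BM[OF r] E_in_BM[OF s]]] .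
  have "E r u v * E s u v = (\<Sum>l\<le>d. e l * E l u v)" for u v
    using fun_cong[OF fun_cong[OF e, of u], of v] by simp
  then have "tinner (Ups r s t) (Ups r s t) = (\<Sum>u\<in>UNIV. \<Sum>v\<in>UNIV. \<Sum>l\<le>d. e l * (E l u v * E t v u))"
    using tinner_Ups[OF r s t r s t] E_sym[OF t]
    by (simp add: sum_distrib_right mult.assoc)
  also have "\<dots> = (\<Sum>l\<le>d. \<Sum>u\<in>UNIV. \<Sum>v\<in>UNIV. e l * (E l u v * E t v u))"
    by (rule sum_swap_outermost)
  also have "\<dots> = (\<Sum>l\<le>d. e l * trace (mmul (E l) (E t)))"
    by (simp add: trace_def mmul_apply sum_distrib_left)
  also have "\<dots> = (\<Sum>l\<le>d. if l = t then e t * trace (E t) else 0)"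
    using E_mmul_E t by (intro sum.cong) (auto simp: trace_def)
  also have "\<dots> = e t * trace (E t)"
    using t by simp
  finally show ?thesis
    using krein_coeff[OF t e] by simp
qed

lemma krein_support_iff:
  "(r, s, t) \<in> krein_support d E \<longleftrightarrow> r \<le> d \<and> s \<le> d \<and> t \<le> d \<and> Ups r s t \<noteq> 0"
proof (cases "r \<le> d \<and> s \<le> d \<and> t \<le> d")
  case True
  then have r: "r \<le> d" and s: "s \<le> d" and t: "t \<le> d"
    by auto
  obtain \<tau> where \<tau>: "trace (E t) = of_real \<tau>" "\<tau> > 0"
    using trace_E[OF t] by blast
  have "krein d E r s t = of_real (of_nat (card (UNIV :: 'x set)) * tnorm2 (Ups r s t) / \<tau>)"
    using krein_times_trace[OF r s t] \<tau> by (simp add: tinner_self field_simps)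
  then have "cpos (krein d E r s t) \<longleftrightarrow> tnorm2 (Ups r s t) > 0"
    using \<tau>(2) by (simp add: cpos_def zero_less_mult_iff zero_less_divide_iff card_gt_0_iff)
  also have "\<dots> \<longleftrightarrow> Ups r s t \<noteq> 0"
    by (simp add: order_less_le tnorm2_nonneg tnorm2_eq_0_iff)
  finally show ?thesis
    using True by (simp add: krein_support_def)
qed (auto simp: krein_support_def)

end

section \<open>Delta--Wye expansions\<close>

lemma Upsilon_lincomb:
  "Upsilon (\<Sum>r\<le>d. smul (a r) (B r)) (\<Sum>s\<le>d. smul (b s) (B s)) (\<Sum>t\<le>d. smul (c t) (B t))
   = (\<Sum>r\<le>d. \<Sum>s\<le>d. \<Sum>t\<le>d. tsmul (a r * b s * c t) (Upsilon (B r) (B s) (B t)))"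
proof (intro ext)
  fix x y z
  let ?g = "\<lambda>r s t u. a r * b s * c t * (B r x u * B s y u * B t z u)"
  have "Upsilon (\<Sum>r\<le>d. smul (a r) (B r)) (\<Sum>s\<le>d. smul (b s) (B s)) (\<Sum>t\<le>d. smul (c t) (B t)) x y z
      = (\<Sum>u\<in>UNIV. \<Sum>s\<le>d. \<Sum>r\<le>d. \<Sum>t\<le>d. ?g r s t u)"
    by (simp add: Upsilon_apply sum_distrib_left sum_distrib_right mult_ac)
  also have "\<dots> = (\<Sum>u\<in>UNIV. \<Sum>r\<le>d. \<Sum>s\<le>d. \<Sum>t\<le>d. ?g r s t u)"
    by (intro sum.cong refl sum.swap)
  also have "\<dots> = (\<Sum>r\<le>d. \<Sum>s\<le>d. \<Sum>t\<le>d. \<Sum>u\<in>UNIV. ?g r s t u)"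
    by (subst sum_swap_outermost, intro sum.cong refl sum.swap)
  also have "\<dots> = (\<Sum>r\<le>d. \<Sum>s\<le>d. \<Sum>t\<le>d. tsmul (a r * b s * c t) (Upsilon (B r) (B s) (B t))) x y z"
    by (simp add: Upsilon_apply sum_distrib_left)
  finally show "Upsilon (\<Sum>r\<le>d. smul (a r) (B r)) (\<Sum>s\<le>d. smul (b s) (B s)) (\<Sum>t\<le>d. smul (c t) (B t)) x y z
      = (\<Sum>r\<le>d. \<Sum>s\<le>d. \<Sum>t\<le>d. tsmul (a r * b s * c t) (Upsilon (B r) (B s) (B t))) x y z" .
qed

lemma sum3_delta:
  assumes "r \<le> d" "s \<le> d" "t \<le> (d::nat)"
  shows "(\<Sum>r'\<le>d. \<Sum>s'\<le>d. \<Sum>t'\<le>d. if r' = r \<and> s' = s \<and> t' = t then X else 0) = X"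
proof -
  have "(if r' = r \<and> s' = s \<and> t' = t then X else 0)
      = (if t' = t then if s' = s then if r' = r then X else 0 else 0 else 0)" for r' s' t'
    by simp
  then show ?thesis
    using assms by simp
qed

context scheme_idempotents
begin

definition ups_sum :: "(nat \<Rightarrow> nat \<Rightarrow> nat \<Rightarrow> complex) \<Rightarrow> 'x tensor" where
  "ups_sum c = (\<Sum>r\<le>d. \<Sum>s\<le>d. \<Sum>t\<le>d. tsmul (c r s t) (Ups r s t))"

lemma tinner_ups_sum:
  assumes "r \<le> d" "s \<le> d" "t \<le> d"
  shows "tinner (ups_sum c) (Ups r s t) = c r s t * tinner (Ups r s t) (Ups r s t)"
proof -
  have "tinner (ups_sum c) (Ups r s t)
      = (\<Sum>r'\<le>d. \<Sum>s'\<le>d. \<Sum>t'\<le>d.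
           if r' = r \<and> s' = s \<and> t' = t then c r s t * tinner (Ups r s t) (Ups r s t) else 0)"
    unfolding ups_sum_def tinner_sum_left tinner_tsmul_left using tinner_Ups assms
    by (intro sum.cong refl) auto
  then show ?thesis
    using sum3_delta[OF assms] by simp
qed

lemma ups_sum_coeff_eq:
  assumes "ups_sum c = ups_sum c'" "(r, s, t) \<in> krein_support d E"
  shows "c r s t = c' r s t"
proof -
  have rst: "r \<le> d" "s \<le> d" "t \<le> d" "Ups r s t \<noteq> 0"
    using assms(2) krein_support_iff by auto
  then have "tinner (Ups r s t) (Ups r s t) \<noteq> 0"
    by (simp add: tinner_self tnorm2_eq_0_iff)
  moreover have "c r s t * tinner (Ups r s t) (Ups r s t) = c' r s t * tinner (Ups r s t) (Ups r s t)"
    using tinner_ups_sum[OF rst(1-3), of c] tinner_ups_sum[OF rst(1-3), of c'] unfolding assms(1) by auto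
  ultimately show ?thesis
    by simp
qed

lemma ups_sum_cong:
  assumes "\<And>r s t. (r, s, t) \<in> krein_support d E \<Longrightarrow> c r s t = c' r s t"
  shows "ups_sum c = ups_sum c'"
  unfolding ups_sum_def
proof (intro sum.cong refl)
  fix r s t
  assume "r \<in> {..d}" "s \<in> {..d}" "t \<in> {..d}"
  then show "tsmul (c r s t) (Ups r s t) = tsmul (c' r s t) (Ups r s t)"
    using assms[of r s t] krein_support_iff[of r s t] by (cases "Ups r s t = 0") (auto simp: tsmul_def)
qed

lemma sum_krein_support_eq_ups_sum:
  "(\<Sum>(r, s, t)\<in>krein_support d E. tsmul (\<sigma> (r, s, t)) (Ups r s t)) = ups_sum (\<lambda>r s t. \<sigma> (r, s, t))"
proof -
  have "(\<Sum>(r, s, t)\<in>krein_support d E. tsmul (\<sigma> (r, s, t)) (Ups r s t))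
     = (\<Sum>(r, s, t)\<in>{..d} \<times> {..d} \<times> {..d}. tsmul (\<sigma> (r, s, t)) (Ups r s t))"
    by (rule sum.mono_neutral_left) (auto simp: krein_support_iff tsmul_def fun_eq_iff)
  then show ?thesis
    by (simp add: ups_sum_def sum.cartesian_product)
qed

lemma tsmul_ups_sum: "tsmul a (ups_sum c) = ups_sum (\<lambda>r s t. a * c r s t)"
  by (simp add: ups_sum_def fun_eq_iff sum_distrib_left mult.assoc)

lemma sum_ups_sum: "(\<Sum>i\<in>S. ups_sum (c i)) = ups_sum (\<lambda>r s t. \<Sum>i\<in>S. c i r s t)"
proof (induction S rule: infinite_finite_induct)
  case (insert a S)
  then show ?case
    by (simp add: ups_sum_def fun_eq_iff sum.distrib distrib_right)
qed (simp_all add: ups_sum_def fun_eq_iff)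

lemma Upsilon_BM_eq_ups_sum:
  assumes "L \<in> BM" "M \<in> BM" "N \<in> BM"
  shows "\<exists>c. Upsilon L M N = ups_sum c"
proof -
  obtain a b c where "L = (\<Sum>l\<le>d. smul (a l) (E l))" "M = (\<Sum>l\<le>d. smul (b l) (E l))"
      "N = (\<Sum>l\<le>d. smul (c l) (E l))"
    using BM_obtain_E[OF assms(1)] BM_obtain_E[OF assms(2)] BM_obtain_E[OF assms(3)] .
  then have "Upsilon L M N = ups_sum (\<lambda>r s t. a r * b s * c t)"
    by (simp only: Upsilon_lincomb ups_sum_def)
  then show ?thesis
    by blast
qed

lemma tspan_Upsilon_eq_ups_sum:
  assumes "T \<in> tspan {Upsilon L M N | L M N. L \<in> BM \<and> M \<in> BM \<and> N \<in> BM}"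
  shows "\<exists>c. T = ups_sum c"
proof -
  obtain F a where F: "finite F" "F \<subseteq> {Upsilon L M N | L M N. L \<in> BM \<and> M \<in> BM \<and> N \<in> BM}"
    and T: "T = (\<Sum>f\<in>F. tsmul (a f) f)"
    using assms unfolding tspan_def by blast
  have "\<exists>c. f = ups_sum c" if f: "f \<in> F" for f
  proof -
    obtain L M N where "f = Upsilon L M N" "L \<in> BM" "M \<in> BM" "N \<in> BM"
      using F(2) f by blast
    then show ?thesis
      using Upsilon_BM_eq_ups_sum by blast
  qed
  then obtain c where c: "\<forall>f\<in>F. f = ups_sum (c f)"
    using bchoice[of F "\<lambda>f c. f = ups_sum c"] by blast
  have "T = (\<Sum>f\<in>F. tsmul (a f) (ups_sum (c f)))"
    unfolding T using c by (intro sum.cong) auto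
  also have "\<dots> = ups_sum (\<lambda>r s t. \<Sum>f\<in>F. a f * c f r s t)"
    by (simp only: tsmul_ups_sum sum_ups_sum)
  finally show ?thesis
    by blast
qed

lemma dw_param_eq_coeff:
  assumes "Delta (A i) (A j) (A k) = ups_sum c" "(r, s, t) \<in> krein_support d E"
  shows "dw_param d A E i j k r s t = c r s t"
proof -
  have "(THE v. \<exists>\<sigma>. Delta (A i) (A j) (A k) =
          (\<Sum>(r', s', t')\<in>krein_support d E. tsmul (\<sigma> (r', s', t')) (Ups r' s' t')) \<and> \<sigma> (r, s, t) = v)
      = c r s t"
  proof (rule the_equality)
    show "\<exists>\<sigma>. Delta (A i) (A j) (A k) =
        (\<Sum>(r', s', t')\<in>krein_support d E. tsmul (\<sigma> (r', s', t')) (Ups r' s' t')) \<and> \<sigma> (r, s, t) = c r s t"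
      using assms(1) sum_krein_support_eq_ups_sum[of "\<lambda>(r, s, t). c r s t"]
      by (intro exI[of _ "\<lambda>(r, s, t). c r s t"]) simp
  next
    fix v
    assume "\<exists>\<sigma>. Delta (A i) (A j) (A k) =
        (\<Sum>(r', s', t')\<in>krein_support d E. tsmul (\<sigma> (r', s', t')) (Ups r' s' t')) \<and> \<sigma> (r, s, t) = v"
    then obtain \<sigma> where "Delta (A i) (A j) (A k) = ups_sum (\<lambda>r s t. \<sigma> (r, s, t))" "\<sigma> (r, s, t) = v"
      unfolding sum_krein_support_eq_ups_sum by blast
    then show "v = c r s t"
      using ups_sum_coeff_eq[OF _ assms(2), of "\<lambda>r s t. \<sigma> (r, s, t)" c] assms(1) by simp
  qed
  then show ?thesis
    using assms(2) unfolding dw_param_def by simp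
qed

lemma Delta_eq_ups_sum_dw_param:
  assumes "Delta (A i) (A j) (A k) \<in> tspan {Upsilon L M N | L M N. L \<in> BM \<and> M \<in> BM \<and> N \<in> BM}"
  shows "Delta (A i) (A j) (A k) = ups_sum (dw_param d A E i j k)"
proof -
  obtain c where c: "Delta (A i) (A j) (A k) = ups_sum c"
    using tspan_Upsilon_eq_ups_sum[OF assms] by blast
  also have "\<dots> = ups_sum (dw_param d A E i j k)"
    using dw_param_eq_coeff[OF c] by (intro ups_sum_cong) simp
  finally show ?thesis .
qed

end

lemma dw_param_outside_support:
  "(r, s, t) \<notin> krein_support d E \<Longrightarrow> dw_param d A E i j k r s t = 0"
  by (simp add: dw_param_def)

definition contract_mid :: "'x::finite tensor \<Rightarrow> 'x mat" where
  "contract_mid T = (\<lambda>x z. \<Sum>y\<in>UNIV. T x y z)"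

lemma contract_mid_sum: "contract_mid (\<Sum>i\<in>S. f i) = (\<Sum>i\<in>S. contract_mid (f i))"
  by (intro ext) (simp add: contract_mid_def sum.swap[of _ UNIV S])

lemma contract_mid_tsmul: "contract_mid (tsmul c T) = smul c (contract_mid T)"
  by (simp add: contract_mid_def fun_eq_iff sum_distrib_left)

context scheme_idempotents
begin

lemma ups_sum_indicator:
  assumes "r \<le> d" "s \<le> d" "t \<le> d"
  shows "ups_sum (\<lambda>r' s' t'. if r' = r \<and> s' = s \<and> t' = t then X else 0) = tsmul X (Ups r s t)"
proof -
  have "tsmul (if P then X else 0) T = (if P then tsmul X T else 0)" for P and T :: "'x tensor"
    by (simp add: tsmul_def fun_eq_iff)
  then show ?thesis
    unfolding ups_sum_def using sum3_delta[OF assms] by (simp cong: if_cong)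
qed

lemma Ups_triv_idx: "Ups triv_idx triv_idx triv_idx = (\<lambda>x y z. 1 / (of_nat (card (UNIV :: 'x set)))\<^sup>2)"
  by (simp add: fun_eq_iff Upsilon_apply E_triv_idx ones_def power2_eq_square)

lemma triv_idx_in_krein_support: "(triv_idx, triv_idx, triv_idx) \<in> krein_support d E"
  using krein_support_iff triv_idx_le Ups_triv_idx by (simp add: fun_eq_iff)

lemma contract_mid_Ups:
  assumes "r \<le> d" "s \<le> d" "t \<le> d"
  shows "contract_mid (Ups r s t) = (if s = triv_idx \<and> t = r then E r else 0)"
proof (intro ext)
  fix x z
  have "contract_mid (Ups r s t) x z = (\<Sum>u\<in>UNIV. E r x u * E t z u * (\<Sum>y\<in>UNIV. E s y u))"
    unfolding contract_mid_def Upsilon_apply sum_distrib_left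
    by (subst sum.swap) (simp add: mult_ac)
  also have "\<dots> = of_bool (s = triv_idx) * mmul (E r) (E t) x z"
    using sum_col_E[OF assms(2)] E_sym[OF assms(3)] by (simp add: mmul_apply)
  also have "\<dots> = (if s = triv_idx \<and> t = r then E r else 0) x z"
    using E_mmul_E[OF assms(1,3)] by auto
  finally show "contract_mid (Ups r s t) x z = (if s = triv_idx \<and> t = r then E r else 0) x z" .
qed

lemma contract_mid_ups_sum: "contract_mid (ups_sum c) = (\<Sum>r\<le>d. smul (c r triv_idx r) (E r))"
proof -
  have "contract_mid (ups_sum c)
      = (\<Sum>r\<le>d. \<Sum>s\<le>d. \<Sum>t\<le>d. if t = r then if s = triv_idx then smul (c r triv_idx r) (E r) else 0 else 0)"
    unfolding ups_sum_def contract_mid_sum contract_mid_tsmul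
    by (intro sum.cong refl) (auto simp: contract_mid_Ups fun_eq_iff)
  also have "\<dots> = (\<Sum>r\<le>d. smul (c r triv_idx r) (E r))"
    using triv_idx_le by simp
  finally show ?thesis .
qed

end

locale dually_triply_regular_scheme = scheme_idempotents d A E
  for d :: nat and A E :: "nat \<Rightarrow> 'x::finite mat" +
  assumes Delta_in_Upsilon_span: "i \<le> d \<Longrightarrow> j \<le> d \<Longrightarrow> k \<le> d \<Longrightarrow>
    Delta (A i) (A j) (A k) \<in> tspan {Upsilon L M N | L M N. L \<in> BM \<and> M \<in> BM \<and> N \<in> BM}"
begin

lemma Delta_eq_ups_sum:
  "i \<le> d \<Longrightarrow> j \<le> d \<Longrightarrow> k \<le> d \<Longrightarrow> Delta (A i) (A j) (A k) = ups_sum (dw_param d A E i j k)"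
  by (intro Delta_eq_ups_sum_dw_param Delta_in_Upsilon_span)

lemma sum_dw_param:
  assumes "r \<le> d" "s \<le> d" "t \<le> d"
  shows "(\<Sum>i\<le>d. \<Sum>j\<le>d. \<Sum>k\<le>d. dw_param d A E i j k r s t)
       = (if r = triv_idx \<and> s = triv_idx \<and> t = triv_idx
          then (of_nat (card (UNIV :: 'x set)))\<^sup>2 else 0)"
proof -
  let ?c = "\<lambda>r s t. if r = triv_idx \<and> s = triv_idx \<and> t = triv_idx
    then (of_nat (card (UNIV :: 'x set)))\<^sup>2 else 0"
  have "(\<Sum>i\<le>d. \<Sum>j\<le>d. \<Sum>k\<le>d. Delta (A i) (A j) (A k)) = (\<lambda>x y z. 1)"
    by (simp add: fun_eq_iff sum_distrib_left[symmetric] sum_distrib_right[symmetric] sum_A_apply)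
  also have "\<dots> = ups_sum ?c"
    by (simp add: ups_sum_indicator triv_idx_le Ups_triv_idx fun_eq_iff)
  finally have eq: "ups_sum (\<lambda>r s t. \<Sum>i\<le>d. \<Sum>j\<le>d. \<Sum>k\<le>d. dw_param d A E i j k r s t) = ups_sum ?c"
    by (simp add: Delta_eq_ups_sum sum_ups_sum)
  show ?thesis
  proof (cases "(r, s, t) \<in> krein_support d E")
    case True
    then show ?thesis
      using ups_sum_coeff_eq[OF eq True] by simp
  next
    case False
    then have "\<not> (r = triv_idx \<and> s = triv_idx \<and> t = triv_idx)"
      using triv_idx_in_krein_support by auto
    then show ?thesis
      using False by (simp add: dw_param_outside_support)
  qed
qed

lemma eigenvalues_dw_param:
  assumes "i \<le> d"
  shows "smul (of_nat (card (UNIV :: 'x set))) (A i)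
       = (\<Sum>r\<le>d. smul (\<Sum>j\<le>d. \<Sum>k\<le>d. dw_param d A E i j k r triv_idx r) (E r))"
proof -
  have "(\<Sum>j\<le>d. \<Sum>k\<le>d. Delta (A i) (A j) (A k)) x y z = A i x z" for x y z
    by (simp add: sum_distrib_left[symmetric] sum_A_apply)
  then have "contract_mid (\<Sum>j\<le>d. \<Sum>k\<le>d. Delta (A i) (A j) (A k))
      = smul (of_nat (card (UNIV :: 'x set))) (A i)"
    by (simp add: fun_eq_iff contract_mid_def)
  moreover have "(\<Sum>j\<le>d. \<Sum>k\<le>d. Delta (A i) (A j) (A k))
      = ups_sum (\<lambda>r s t. \<Sum>j\<le>d. \<Sum>k\<le>d. dw_param d A E i j k r s t)"
    using assms by (simp add: Delta_eq_ups_sum sum_ups_sum)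
  ultimately show ?thesis
    by (simp add: contract_mid_ups_sum)
qed

end

section \<open>Schemes with a common eigenmatrix\<close>

context scheme_idempotents
begin

lemma eigP_eq_coeff: "A i = (\<Sum>l\<le>d. smul (p l) (E l)) \<Longrightarrow> j \<le> d \<Longrightarrow> eigP d A E j i = p j"
  unfolding eigP_def by (rule the_lincomb_coeff[OF E_lin_indep])

lemma dualQ_eq_coeff:
  "E i = (\<Sum>l\<le>d. smul (q l) (A l)) \<Longrightarrow> j \<le> d \<Longrightarrow> dualQ d A E j i = of_nat (card (UNIV :: 'x set)) * q j"
  unfolding dualQ_def
  using the_scaled_lincomb_coeff[OF A_lin_indep, of "E i" q j "1 / of_nat (card (UNIV :: 'x set))"] by simp

end

locale common_eigenmatrix =
  X: scheme_idempotents d A E + Y: scheme_idempotents d A' E'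
  for d :: nat and A E :: "nat \<Rightarrow> 'x::finite mat" and A' E' :: "nat \<Rightarrow> 'y::finite mat" +
  fixes P :: "nat \<Rightarrow> nat \<Rightarrow> complex"
  assumes A_eq: "i \<le> d \<Longrightarrow> A i = (\<Sum>r\<le>d. smul (P r i) (E r))"
    and A'_eq: "i \<le> d \<Longrightarrow> A' i = (\<Sum>r\<le>d. smul (P r i) (E' r))"
    and card_eq: "card (UNIV :: 'x set) = card (UNIV :: 'y set)"
begin

text \<open>If E_j = \<Sum>_i b_i A_i then \<Sum>_i b_i P_ri = \<delta>_rj, by independence of the E_r; the same
  coefficients therefore express E'_j through the A'_i.\<close>

lemma kappa_E:
  assumes j: "j \<le> d"
  shows "kappa d A A' (E j) = E' j"
proof -
  define b where "b = coord d A (E j)"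
  have Ej: "E j = (\<Sum>i\<le>d. smul (b i) (A i))"
    unfolding b_def using X.lincomb_coord X.E_in_BM[OF j] .
  have "(\<Sum>r\<le>d. smul (\<Sum>i\<le>d. b i * P r i) (E r)) = (\<Sum>i\<le>d. smul (b i) (\<Sum>r\<le>d. smul (P r i) (E r)))"
    by (rule lincomb_lincomb[symmetric])
  also have "\<dots> = E j"
    unfolding Ej using A_eq by (intro sum.cong) auto
  also have "\<dots> = (\<Sum>r\<le>d. smul (of_bool (r = j)) (E r))"
    by (rule lincomb_indicator[OF j, symmetric])
  finally have "(\<Sum>r\<le>d. smul (\<Sum>i\<le>d. b i * P r i) (E r)) = (\<Sum>r\<le>d. smul (of_bool (r = j)) (E r))" .
  from lin_indep_coeff_eq[OF X.E_lin_indep this]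
  have coeff: "r \<le> d \<Longrightarrow> (\<Sum>i\<le>d. b i * P r i) = of_bool (r = j)" for r .
  have "kappa d A A' (E j) = (\<Sum>i\<le>d. smul (b i) (\<Sum>r\<le>d. smul (P r i) (E' r)))"
    unfolding Ej X.kappa_lincomb_A using A'_eq by (intro sum.cong) auto
  also have "\<dots> = (\<Sum>r\<le>d. smul (of_bool (r = j)) (E' r))"
    unfolding lincomb_lincomb using coeff by (intro sum.cong) auto
  also have "\<dots> = E' j"
    by (rule lincomb_indicator[OF j])
  finally show ?thesis .
qed

lemma kappa_lincomb_E: "kappa d A A' (\<Sum>r\<le>d. smul (a r) (E r)) = (\<Sum>r\<le>d. smul (a r) (E' r))"
  using X.kappa_lincomb[of d E A' a] X.E_in_BM kappa_E by simp

lemma kappa_mmul: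
  assumes "M \<in> X.BM" "N \<in> X.BM"
  shows "kappa d A A' (mmul M N) = mmul (kappa d A A' M) (kappa d A A' N)"
proof -
  obtain a b where "M = (\<Sum>r\<le>d. smul (a r) (E r))" "N = (\<Sum>r\<le>d. smul (b r) (E r))"
    using X.BM_obtain_E[OF assms(1)] X.BM_obtain_E[OF assms(2)] .
  then show ?thesis
    by (simp only: X.lincomb_E_mmul Y.lincomb_E_mmul kappa_lincomb_E)
qed

lemma kappa_schur:
  assumes "M \<in> X.BM" "N \<in> X.BM"
  shows "kappa d A A' (schur M N) = schur (kappa d A A' M) (kappa d A A' N)"
proof -
  obtain a b where "M = (\<Sum>r\<le>d. smul (a r) (A r))" "N = (\<Sum>r\<le>d. smul (b r) (A r))"
    using X.BM_obtain[OF assms(1)] X.BM_obtain[OF assms(2)] .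
  then show ?thesis
    by (simp only: X.schur_lincomb_A Y.schur_lincomb_A X.kappa_lincomb_A)
qed

lemma inum_eq:
  assumes "i \<le> d" "j \<le> d" "k \<le> d"
  shows "inum A i j k = inum A' i j k"
proof -
  obtain p where p: "mmul (A i) (A j) = (\<Sum>l\<le>d. smul (p l) (A l))"
    using X.BM_obtain[OF X.A_mmul_closed[OF assms(1,2)]] .
  have "mmul (A' i) (A' j) = kappa d A A' (mmul (A i) (A j))"
    using kappa_mmul[OF X.A_in_BM X.A_in_BM] X.kappa_A[of _ A'] assms by simp
  then have "mmul (A' i) (A' j) = (\<Sum>l\<le>d. smul (p l) (A' l))"
    unfolding p X.kappa_lincomb_A .
  then have "(of_nat (inum A i j k) :: complex) = of_nat (inum A' i j k)"
    using X.inum_eq_coeff[OF assms p] Y.inum_eq_coeff[OF assms] by simp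
  then show ?thesis
    by simp
qed

lemma eigP_eq: "i \<le> d \<Longrightarrow> j \<le> d \<Longrightarrow> eigP d A E j i = eigP d A' E' j i"
  using X.eigP_eq_coeff[OF A_eq] Y.eigP_eq_coeff[OF A'_eq] by simp

lemma dualQ_eq:
  assumes "i \<le> d" "j \<le> d"
  shows "dualQ d A E j i = dualQ d A' E' j i"
proof -
  define q where "q = coord d A (E i)"
  have Ei: "E i = (\<Sum>l\<le>d. smul (q l) (A l))"
    unfolding q_def using X.lincomb_coord X.E_in_BM[OF assms(1)] .
  have "E' i = kappa d A A' (E i)"
    using kappa_E[OF assms(1)] by simp
  also have "\<dots> = (\<Sum>l\<le>d. smul (q l) (A' l))"
    unfolding Ei by (rule X.kappa_lincomb_A)
  finally show ?thesis
    using Ei X.dualQ_eq_coeff Y.dualQ_eq_coeff assms(2) card_eq by simp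
qed

lemma krein_eq:
  assumes "i \<le> d" "j \<le> d" "k \<le> d"
  shows "krein d E i j k = krein d E' i j k"
proof -
  obtain e where e: "schur (E i) (E j) = (\<Sum>l\<le>d. smul (e l) (E l))"
    using X.BM_obtain_E[OF X.BM_schur[OF X.E_in_BM[OF assms(1)] X.E_in_BM[OF assms(2)]]] .
  have "schur (E' i) (E' j) = kappa d A A' (schur (E i) (E j))"
    using kappa_schur[OF X.E_in_BM X.E_in_BM] kappa_E assms by simp
  then have "schur (E' i) (E' j) = (\<Sum>l\<le>d. smul (e l) (E' l))"
    unfolding e kappa_lincomb_E .
  then show ?thesis
    using X.krein_coeff[OF assms(3) e] Y.krein_coeff[OF assms(3)] card_eq by simp
qed

end

context dually_triply_regular_scheme
begin

lemma A_eq_lincomb_dw_param: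
  assumes "i \<le> d"
  shows "A i = (\<Sum>r\<le>d. smul ((\<Sum>j\<le>d. \<Sum>k\<le>d. dw_param d A E i j k r triv_idx r)
                                / of_nat (card (UNIV :: 'x set))) (E r))"
proof -
  have "A i = smul (1 / of_nat (card (UNIV :: 'x set))) (smul (of_nat (card (UNIV :: 'x set))) (A i))"
    by (simp add: fun_eq_iff)
  then show ?thesis
    unfolding eigenvalues_dw_param[OF assms] smul_lincomb by simp
qed

end

lemma common_eigenmatrix_if_same_dw_params:
  fixes A E :: "nat \<Rightarrow> 'x::finite mat" and A' E' :: "nat \<Rightarrow> 'y::finite mat"
  assumes "dually_triply_regular_scheme d A E" "dually_triply_regular_scheme d A' E'"
    and same: "\<forall>i\<le>d. \<forall>j\<le>d. \<forall>k\<le>d. \<forall>r\<le>d. \<forall>s\<le>d. \<forall>t\<le>d.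
      dw_param d A E i j k r s t = dw_param d A' E' i j k r s t"
  shows "\<exists>P. common_eigenmatrix d A E A' E' P"
proof -
  interpret X: dually_triply_regular_scheme d A E by fact
  interpret Y: dually_triply_regular_scheme d A' E' by fact
  let ?t = X.triv_idx
  have "(\<Sum>i\<le>d. \<Sum>j\<le>d. \<Sum>k\<le>d. dw_param d A E i j k ?t ?t ?t)
      = (\<Sum>i\<le>d. \<Sum>j\<le>d. \<Sum>k\<le>d. dw_param d A' E' i j k ?t ?t ?t)"
    using same X.triv_idx_le by (intro sum.cong refl) auto
  then have "(of_nat (card (UNIV :: 'x set)) :: complex)\<^sup>2
      = (if ?t = Y.triv_idx then (of_nat (card (UNIV :: 'y set)))\<^sup>2 else 0)"
    using X.sum_dw_param[OF X.triv_idx_le X.triv_idx_le X.triv_idx_le]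
      Y.sum_dw_param[OF X.triv_idx_le X.triv_idx_le X.triv_idx_le] by simp
  then have triv_eq: "X.triv_idx = Y.triv_idx"
    and "card (UNIV :: 'x set) ^ 2 = card (UNIV :: 'y set) ^ 2"
    by (auto split: if_splits simp flip: of_nat_power)
  then have card_eq: "card (UNIV :: 'x set) = card (UNIV :: 'y set)"
    by (simp add: power2_eq_iff_nonneg)
  define P where
    "P r i = (\<Sum>j\<le>d. \<Sum>k\<le>d. dw_param d A E i j k r ?t r) / of_nat (card (UNIV :: 'x set))"
    for r i
  have "A' i = (\<Sum>r\<le>d. smul (P r i) (E' r))" if "i \<le> d" for i
    unfolding Y.A_eq_lincomb_dw_param[OF that] P_def card_eq triv_eq
    using same that Y.triv_idx_le by (intro sum.cong refl arg_cong2[where f = smul]) auto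
  moreover have "A i = (\<Sum>r\<le>d. smul (P r i) (E r))" if "i \<le> d" for i
    unfolding P_def using X.A_eq_lincomb_dw_param[OF that] .
  ultimately have "common_eigenmatrix d A E A' E' P"
    using card_eq by unfold_locales
  then show ?thesis
    by blast
qed

section \<open>Association schemes as matrix schemes\<close>

lemma tspan_base:
  assumes "T \<in> S"
  shows "T \<in> tspan S"
  unfolding tspan_def
proof (rule CollectI, rule exI[of _ "{T}"], rule exI[of _ "\<lambda>_. 1"])
  show "finite {T} \<and> {T} \<subseteq> S \<and> T = (\<Sum>f\<in>{T}. tsmul 1 f)"
    using assms by (simp add: tsmul_def)
qed

lemma matrix_scheme_reindex:
  assumes B: "matrix_scheme d B" and A: "bij_betw A {..d} (B ` {..d})"
  shows "matrix_scheme d A"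
proof -
  interpret matrix_scheme d B by (fact B)
  have inj: "inj_on A {..d}" and img: "A ` {..d} = B ` {..d}"
    using A by (auto simp: bij_betw_def)
  have A_B: "A i \<in> B ` {..d}" if "i \<le> d" for i
    using img that by blast
  have B_A: "B a \<in> A ` {..d}" if "a \<le> d" for a
    using img that by blast
  show ?thesis
  proof
    fix i x y
    assume "i \<le> d"
    then obtain a where a: "a \<le> d" "A i = B a"
      using A_B by blast
    show "A i x y = 0 \<or> A i x y = 1" "A i \<noteq> 0" "A i x y = A i y x"
      using A_01[OF a(1)] A_nonzero[OF a(1)] A_sym[OF a(1)] a(2) by simp_all
  next
    fix i l x y
    assume il: "i \<le> d" "l \<le> d" "i \<noteq> l"
    obtain a b where ab: "a \<le> d" "b \<le> d" "A i = B a" "A l = B b"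
      using A_B il(1,2) by blast
    have "a \<noteq> b"
      using il inj_onD[OF inj, of i l] ab(3,4) by auto
    then show "A i x y = 0 \<or> A l x y = 0"
      using A_disjoint[OF ab(1,2)] ab(3,4) by simp
  next
    fix x y
    obtain a where a: "a \<le> d" "B a x y = 1"
      using A_cover by blast
    then obtain i where "i \<le> d" "B a = A i"
      using B_A by blast
    then show "\<exists>i\<le>d. A i x y = 1"
      using a(2) by auto
  next
    fix i j
    assume "i \<le> d" "j \<le> d"
    then obtain a b where "a \<le> d" "b \<le> d" "A i = B a" "A j = B b"
      using A_B by blast
    then show "mmul (A i) (A j) \<in> lincombs d A"
      using A_mmul_closed lincombs_reindex[OF inj A_inj img] by simp
  qed
qed

lemma sym_assoc_scheme_cover:
  assumes "sym_assoc_scheme d R"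
  obtains k where "k \<le> d" "(x, y) \<in> R k"
proof -
  have "(\<Union>i\<le>d. R i) = UNIV"
    using assms unfolding sym_assoc_scheme_def by (elim conjE)
  then show ?thesis
    using that by blast
qed

lemma sym_assoc_scheme_disjoint:
  assumes "sym_assoc_scheme d R" "i \<le> d" "j \<le> d" "i \<noteq> j" "(x, y) \<in> R i"
  shows "(x, y) \<notin> R j"
proof -
  have "\<forall>i\<le>d. \<forall>j\<le>d. i \<noteq> j \<longrightarrow> R i \<inter> R j = {}"
    using assms(1) unfolding sym_assoc_scheme_def by (elim conjE)
  then show ?thesis
    using assms(2-) by blast
qed

lemma sym_assoc_scheme_nonempty:
  assumes "sym_assoc_scheme d R" "i \<le> d"
  shows "R i \<noteq> {}"
proof -
  have "\<forall>i\<le>d. R i \<noteq> {}"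
    using assms(1) unfolding sym_assoc_scheme_def by (elim conjE)
  then show ?thesis
    using assms(2) by blast
qed

lemma sym_assoc_scheme_sym:
  assumes "sym_assoc_scheme d R" "i \<le> d"
  shows "sym (R i)"
proof -
  have "\<forall>i\<le>d. sym (R i)"
    using assms(1) unfolding sym_assoc_scheme_def by (elim conjE)
  then show ?thesis
    using assms(2) by blast
qed

lemma sym_assoc_scheme_regular:
  assumes "sym_assoc_scheme d R" "i \<le> d" "j \<le> d" "k \<le> d" "(x, y) \<in> R k" "(x', y') \<in> R k"
  shows "card {z. (x, z) \<in> R i \<and> (z, y) \<in> R j} = card {z. (x', z) \<in> R i \<and> (z, y') \<in> R j}"
proof -
  have "\<forall>i\<le>d. \<forall>j\<le>d. \<forall>k\<le>d. \<forall>x y x' y'. (x, y) \<in> R k \<longrightarrow> (x', y') \<in> R k \<longrightarrow>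
      card {z. (x, z) \<in> R i \<and> (z, y) \<in> R j} = card {z. (x', z) \<in> R i \<and> (z, y') \<in> R j}"
    using assms(1) unfolding sym_assoc_scheme_def by (elim conjE)
  then show ?thesis
    using assms(2-) by blast
qed

lemma adj_mmul_adj:
  assumes R: "sym_assoc_scheme d R" and ab: "a \<le> d" "b \<le> d"
  shows "mmul (adj (R a)) (adj (R b)) = (\<Sum>c\<le>d. smul (of_nat (intersection_number R a b c)) (adj (R c)))"
proof (intro ext)
  fix x y
  obtain c0 where c0: "c0 \<le> d" "(x, y) \<in> R c0"
    using sym_assoc_scheme_cover[OF R] .
  have other: "(x, y) \<notin> R c" if "c \<le> d" "c \<noteq> c0" for c
    using sym_assoc_scheme_disjoint[OF R c0(1) that(1)] that(2) c0(2) by blast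
  obtain x' y' where p: "(SOME p. p \<in> R c0) = (x', y')"
    by (cases "SOME p. p \<in> R c0")
  moreover have "(SOME p. p \<in> R c0) \<in> R c0"
    using c0(2) by (rule someI)
  ultimately have p: "(SOME p. p \<in> R c0) = (x', y')" "(x', y') \<in> R c0"
    by simp_all
  have "intersection_number R a b c0 = card {z. (x, z) \<in> R a \<and> (z, y) \<in> R b}"
    using sym_assoc_scheme_regular[OF R ab c0(1) p(2) c0(2)]
    by (simp add: intersection_number_def p(1) Let_def)
  also have "of_nat \<dots> = (\<Sum>z\<in>UNIV. of_bool ((x, z) \<in> R a \<and> (z, y) \<in> R b) :: complex)"
    by simp
  also have "\<dots> = mmul (adj (R a)) (adj (R b)) x y"
    unfolding mmul_apply adj_def by (intro sum.cong) auto
  finally have "mmul (adj (R a)) (adj (R b)) x y = of_nat (intersection_number R a b c0)" ..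
  also have "\<dots> = (\<Sum>c\<le>d. if c = c0 then of_nat (intersection_number R a b c) else 0)"
    using c0(1) by simp
  also have "\<dots> = (\<Sum>c\<le>d. smul (of_nat (intersection_number R a b c)) (adj (R c))) x y"
    unfolding sum_fun_apply smul_apply using c0 other by (intro sum.cong) (auto simp: adj_def)
  finally show "mmul (adj (R a)) (adj (R b)) x y
      = (\<Sum>c\<le>d. smul (of_nat (intersection_number R a b c)) (adj (R c))) x y" .
qed

lemma matrix_scheme_adj:
  assumes R: "sym_assoc_scheme d R"
  shows "matrix_scheme d (\<lambda>i. adj (R i))"
proof
  fix i l x y
  assume "i \<le> d" "l \<le> d" "i \<noteq> l"
  then show "adj (R i) x y = 0 \<or> adj (R l) x y = 0"
    using sym_assoc_scheme_disjoint[OF R] by (auto simp: adj_def)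
next
  fix x y
  obtain k where "k \<le> d" "(x, y) \<in> R k"
    using sym_assoc_scheme_cover[OF R] .
  then show "\<exists>i\<le>d. adj (R i) x y = 1"
    by (auto simp: adj_def)
next
  fix i
  assume "i \<le> d"
  then obtain x y where "(x, y) \<in> R i"
    using sym_assoc_scheme_nonempty[OF R] by fast
  then show "adj (R i) \<noteq> 0"
    by (auto simp: adj_def fun_eq_iff)
next
  fix i x y
  assume "i \<le> d"
  then show "adj (R i) x y = adj (R i) y x"
    using sym_assoc_scheme_sym[OF R] by (auto simp: adj_def sym_def)
next
  fix i j
  assume "i \<le> d" "j \<le> d"
  show "mmul (adj (R i)) (adj (R j)) \<in> lincombs d (\<lambda>i. adj (R i))"
    unfolding adj_mmul_adj[OF R \<open>i \<le> d\<close> \<open>j \<le> d\<close>] lincombs_def by (rule CollectI, rule exI, rule refl)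
qed (simp add: adj_def)

lemma dually_triply_regular_scheme_of_assoc_scheme:
  assumes R: "sym_assoc_scheme d R" and "dually_triply_regular d R"
    and A: "adj_ordering d R A" and E: "idem_ordering d R E"
  shows "dually_triply_regular_scheme d A E" and "bose_mesner d R = lincombs d A"
proof -
  have adj: "matrix_scheme d (\<lambda>i. adj (R i))"
    by (rule matrix_scheme_adj[OF R])
  have bij: "bij_betw A {..d} ((\<lambda>i. adj (R i)) ` {..d})"
    using A unfolding adj_ordering_def .
  have scheme: "matrix_scheme d A"
    by (rule matrix_scheme_reindex[OF adj bij])
  have "bose_mesner d R = lincombs d (\<lambda>i. adj (R i))"
    by (simp add: bose_mesner_def lincombs_def)
  also have "\<dots> = lincombs d A"
    using bij by (intro lincombs_reindex matrix_scheme.A_inj[OF adj] matrix_scheme.A_inj[OF scheme])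
      (auto simp: bij_betw_def)
  finally have BM: "bose_mesner d R = lincombs d A" .
  interpret matrix_scheme d A
    by (fact scheme)
  show "bose_mesner d R = lincombs d A"
    by (fact BM)
  have "Delta (A i) (A j) (A k) \<in> tspan {Upsilon L M N | L M N. L \<in> BM \<and> M \<in> BM \<and> N \<in> BM}"
    if "i \<le> d" "j \<le> d" "k \<le> d" for i j k
  proof -
    have "Delta (A i) (A j) (A k) \<in> Delta_space d R"
      unfolding Delta_space_def BM using that A_in_BM by (blast intro: tspan_base)
    then show ?thesis
      using assms(2) unfolding dually_triply_regular_def Upsilon_space_def BM by blast
  qed
  moreover have "bij_betw E {..d} {F. primitive_idempotent d A F}"
    using E unfolding idem_ordering_def prim_idem_def primitive_idempotent_def BM .
  ultimately show "dually_triply_regular_scheme d A E"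
    using scheme by unfold_locales
qed

theorem mainTheorem4:
  fixes d :: nat
    and R :: "nat \<Rightarrow> ('x::finite \<times> 'x) set"
    and S :: "nat \<Rightarrow> ('y::finite \<times> 'y) set"
    and A E :: "nat \<Rightarrow> 'x mat"
    and A' E' :: "nat \<Rightarrow> 'y mat"
  assumes "sym_assoc_scheme d R" and "sym_assoc_scheme d S"
    and "exactly_triply_regular d R" and "exactly_triply_regular d S"
    and "adj_ordering d R A" and "adj_ordering d S A'"
    and "idem_ordering d R E" and "idem_ordering d S E'"
    and "\<forall>i\<le>d. \<forall>j\<le>d. \<forall>k\<le>d. \<forall>r\<le>d. \<forall>s\<le>d. \<forall>t\<le>d.
           dw_param d A E i j k r s t = dw_param d A' E' i j k r s t"
  shows "(\<forall>i\<le>d. \<forall>j\<le>d. \<forall>k\<le>d. inum A i j k = inum A' i j k)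
       \<and> (\<forall>i\<le>d. \<forall>j\<le>d. eigP d A E j i = eigP d A' E' j i)
       \<and> (\<forall>i\<le>d. \<forall>j\<le>d. dualQ d A E j i = dualQ d A' E' j i)
       \<and> (\<forall>i\<le>d. \<forall>j\<le>d. \<forall>k\<le>d. krein d E i j k = krein d E' i j k)
       \<and> (\<forall>M\<in>bose_mesner d R. \<forall>N\<in>bose_mesner d R.
            kappa d A A' (mmul M N) = mmul (kappa d A A' M) (kappa d A A' N)
          \<and> kappa d A A' (schur M N) = schur (kappa d A A' M) (kappa d A A' N))
       \<and> (\<forall>j\<le>d. kappa d A A' (E j) = E' j)"
proof -
  have "dually_triply_regular d R" "dually_triply_regular d S"
    using assms(3,4) by (simp_all add: exactly_triply_regular_def)
  then have X: "dually_triply_regular_scheme d A E" "bose_mesner d R = lincombs d A"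
    and Y: "dually_triply_regular_scheme d A' E'"
    using dually_triply_regular_scheme_of_assoc_scheme assms(1,2,5-8) by blast+
  obtain P where "common_eigenmatrix d A E A' E' P"
    using common_eigenmatrix_if_same_dw_params[OF X(1) Y assms(9)] ..
  then interpret common_eigenmatrix d A E A' E' P .
  show ?thesis
    unfolding X(2) using inum_eq eigP_eq dualQ_eq krein_eq kappa_mmul kappa_schur kappa_E by simp
qed

end
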